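(* Let $A_0,\dots,A_n$ be any hyperplanes in $\mathbb P^n$ over a field $F$, and let $f_i$ be a rational function with divisor $A_i-A_0$ ($i=1,\dots,n$). Then the class of $\{f_1,\dots,f_n\}$ in $K^M_n(F(\mathbb P^n))/F^*\cdot K^M_{n-1}(F(\mathbb P^n))$ is nonzero if and only if the hyperplanes are in generic position.
   Context: $K^M_n$ is Milnor $K$-theory, $F(\mathbb P^n)$ the function field, and $F^*\cdot K^M_{n-1}(F(\mathbb P^n))$ the subgroup generated by symbols $\{c\}\cdot\alpha$ with $c\in F^*$ a constant and $\alpha\in K^M_{n-1}(F(\mathbb P^n))$ (so the class does not depend on the choice of the $f_i$). The $n+1$ hyperplanes are in generic position if their linear equations are linearly independent, i.e. their intersection is empty. *)

theory Defs
  imports Main "HOL-Library.Poly_Mapping" "HOL-Computational_Algebra.Fraction_Field"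
begin

inductive_set zgen :: "'b::ab_group_add set \<Rightarrow> 'b set" for S where
  zgen_zero: "0 \<in> zgen S"
| zgen_gen: "x \<in> S \<Longrightarrow> x \<in> zgen S"
| zgen_diff: "x \<in> zgen S \<Longrightarrow> y \<in> zgen S \<Longrightarrow> x - y \<in> zgen S"

text \<open>The free abelian group on n-tuples (lists) of elements of a field 'k is
  'k list =>0 int; the generator of a tuple xs is symb xs.  K^M_n(k) is the
  quotient of the subgroup spanned by tuples of length n with nonzero entries
  by the subgroup generated by the multilinearity and Steinberg relations.\<close>

definition symb :: "'k list \<Rightarrow> ('k list \<Rightarrow>\<^sub>0 int)" where
  "symb xs = Poly_Mapping.single xs 1"

definition units_list :: "nat \<Rightarrow> 'k::field list set" where
  "units_list m = {xs. length xs = m \<and> (\<forall>x\<in>set xs. x \<noteq> 0)}"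

definition milnor_rel :: "nat \<Rightarrow> ('k::field list \<Rightarrow>\<^sub>0 int) set" where
  "milnor_rel n =
     {symb (xs @ [a * b] @ ys) - symb (xs @ [a] @ ys) - symb (xs @ [b] @ ys) | xs ys a b.
        xs \<in> units_list (length xs) \<and> ys \<in> units_list (length ys) \<and>
        length xs + 1 + length ys = n \<and> a \<noteq> 0 \<and> b \<noteq> 0}
   \<union> {symb (xs @ [a, 1 - a] @ ys) | xs ys a.
        xs \<in> units_list (length xs) \<and> ys \<in> units_list (length ys) \<and>
        length xs + 2 + length ys = n \<and> a \<noteq> 0 \<and> a \<noteq> 1}"

text \<open>Generators of C^* . K^M_{n-1}(k) inside K^M_n(k), for a set C of constants:
  the symbols {c, y_2, ..., y_n} with c in C nonzero.\<close>

definition const_syms :: "'k::field set \<Rightarrow> nat \<Rightarrow> ('k list \<Rightarrow>\<^sub>0 int) set" where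
  "const_syms C n = {symb (c # ys) | c ys. c \<in> C \<and> c \<noteq> 0 \<and> ys \<in> units_list (n - 1)}"

definition nonzero_class_mod_const :: "'k::field set \<Rightarrow> 'k list \<Rightarrow> bool" where
  "nonzero_class_mod_const C xs \<longleftrightarrow>
     symb xs \<notin> zgen (milnor_rel (length xs) \<union> const_syms C (length xs))"

section \<open>The function field F(P^n) = F(x_v : v in 'v), n = CARD('v)\<close>

type_synonym ('v, 'a) mpoly = "('v \<Rightarrow>\<^sub>0 nat) \<Rightarrow>\<^sub>0 'a"

definition const_fun :: "'a::field \<Rightarrow> ('v::{finite,linorder}, 'a) mpoly fract" where
  "const_fun c = Fract (Poly_Mapping.single 0 c) 1"

text \<open>Affine chart X_None = 1 of P^n with homogeneous coordinates indexed by 'v option.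
  The hyperplane with coefficient vector a has (dehomogenized) equation
  a None + sum_v a (Some v) x_v.\<close>

definition lin_form :: "('v::{finite,linorder} option \<Rightarrow> 'a::field) \<Rightarrow> ('v, 'a) mpoly" where
  "lin_form a = Poly_Mapping.single 0 (a None)
     + (\<Sum>v\<in>UNIV. Poly_Mapping.single (Poly_Mapping.single v 1) (a (Some v)))"

definition lin_indep_vecs :: "nat \<Rightarrow> (nat \<Rightarrow> 'j \<Rightarrow> 'a::field) \<Rightarrow> bool" where
  "lin_indep_vecs n a \<longleftrightarrow>
     (\<forall>l::nat \<Rightarrow> 'a. (\<forall>j. (\<Sum>i\<le>n. l i * a i j) = 0) \<longrightarrow> (\<forall>i\<le>n. l i = 0))"

end

(*
  Write L_i for the linear form of the i-th hyperplane, so that f_i = c_i L_i / L_0.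

  If the forms are dependent, a relation l_0 L_0 + ... + l_n L_n = 0 becomes an affine relation
  l_0 + sum_i (l_i / c_i) f_i = 0 with constant coefficients, and a symbol whose entries satisfy a
  nontrivial such relation vanishes modulo constants. Induct on the number of nonzero coefficients:
  pulling a constant out of an entry g_j turns the relation into nu (1 - u) + (other terms) = 0,
  where u is the new entry, and dividing the other entries by 1 - u removes the j-th coefficient at
  the cost of symbols containing u and 1 - u (for a linear relation, divide by g_j and use
  {x, x} = {x, -1}). A single remaining coefficient makes an entry constant.

  If the forms are independent, a linear change of coordinates makes all L_i but one coordinate
  functions and the remaining one a unit at the origin. The exponents of the lowest monomial then
  give a map v : F(P^n)^* -> Z^n that is additive, kills constants and, for u \<noteq> 0, 1, satisfies
  v u = 0, v (1 - u) = 0 or v u = v (1 - u). Hence {x_1, ..., x_n} -> det (v x_1, ..., v x_n) is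
  well defined on K^M_n modulo constants, and it takes the value 1 on {f_1, ..., f_n}.
*)

theory Submission
  imports Defs "Jordan_Normal_Form.Determinant" "HOL-Library.Function_Algebras"
begin

hide_const (open) Rat.Fract

section \<open>Symbols modulo Steinberg relations and constants\<close>

definition milnor_const_rels :: "'k::field set \<Rightarrow> nat \<Rightarrow> ('k list \<Rightarrow>\<^sub>0 int) set" where
  "milnor_const_rels C n = zgen (milnor_rel n \<union> const_syms C n)"

lemma nonzero_class_mod_const_iff:
  "nonzero_class_mod_const C xs \<longleftrightarrow> symb xs \<notin> milnor_const_rels C (length xs)"
  by (simp add: nonzero_class_mod_const_def milnor_const_rels_def)

lemma zgen_uminus: "x \<in> zgen S \<Longrightarrow> - x \<in> zgen S"
  using zgen_diff[OF zgen_zero, of x S] by simp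

lemma zgen_add: "x \<in> zgen S \<Longrightarrow> y \<in> zgen S \<Longrightarrow> x + y \<in> zgen S"
  using zgen_diff[of x S "- y"] zgen_uminus by fastforce

lemma rels_add: "x \<in> milnor_const_rels C n \<Longrightarrow> y \<in> milnor_const_rels C n \<Longrightarrow> x + y \<in> milnor_const_rels C n"
  unfolding milnor_const_rels_def by (rule zgen_add)

lemma rels_diff: "x \<in> milnor_const_rels C n \<Longrightarrow> y \<in> milnor_const_rels C n \<Longrightarrow> x - y \<in> milnor_const_rels C n"
  unfolding milnor_const_rels_def by (rule zgen_diff)

lemma rels_uminus_iff: "- x \<in> milnor_const_rels C n \<longleftrightarrow> x \<in> milnor_const_rels C n"
  unfolding milnor_const_rels_def using zgen_uminus by fastforce

lemma rels_cong: "x - y \<in> milnor_const_rels C n \<Longrightarrow> x \<in> milnor_const_rels C n \<longleftrightarrow> y \<in> milnor_const_rels C n"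
  using rels_diff[of x C n "x - y"] rels_add[of "x - y" C n y] by auto

lemma nth_nonzero: "0 \<notin> set xs \<Longrightarrow> i < length xs \<Longrightarrow> xs ! i \<noteq> 0"
  by (metis nth_mem)

lemma zero_notin_set_update: "0 \<notin> set xs \<Longrightarrow> v \<noteq> 0 \<Longrightarrow> 0 \<notin> set (xs[i := v])"
  using set_update_subset_insert by fastforce

lemma symb_update_mult_rels:
  assumes "i < length xs" "0 \<notin> set xs" "a \<noteq> 0" "b \<noteq> 0"
  shows "symb (xs[i := a * b]) - symb (xs[i := a]) - symb (xs[i := b]) \<in> milnor_const_rels C (length xs)"
proof -
  have split: "xs[i := v] = take i xs @ [v] @ drop (Suc i) xs" for v
    using assms(1) by (simp add: upd_conv_take_nth_drop)
  have "symb (take i xs @ [a * b] @ drop (Suc i) xs) - symb (take i xs @ [a] @ drop (Suc i) xs)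
      - symb (take i xs @ [b] @ drop (Suc i) xs) \<in> milnor_rel (length xs)"
    unfolding milnor_rel_def using assms
    by (intro UnI1 CollectI exI[of _ "take i xs"] exI[of _ "drop (Suc i) xs"] exI[of _ a] exI[of _ b])
      (auto simp: units_list_def dest: in_set_takeD in_set_dropD)
  then show ?thesis
    unfolding milnor_const_rels_def split by (blast intro: zgen_gen)
qed

lemma symb_steinberg_adj_rels:
  assumes "Suc i < length xs" "0 \<notin> set xs" "xs ! i + xs ! Suc i = 1"
  shows "symb xs \<in> milnor_const_rels C (length xs)"
proof -
  let ?a = "xs ! i"
  have "?a \<noteq> 0" "xs ! Suc i \<noteq> 0"
    using nth_nonzero[OF assms(2)] assms(1) by auto
  then have "?a \<noteq> 1" using assms(3) by auto
  have split: "xs = take i xs @ [?a, 1 - ?a] @ drop (Suc (Suc i)) xs"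
    using assms(1,3)
    by (metis Cons_nth_drop_Suc Suc_lessD add_diff_cancel_left' append_Cons append_self_conv2 append_take_drop_id)
  have "symb (take i xs @ [?a, 1 - ?a] @ drop (Suc (Suc i)) xs) \<in> milnor_rel (length xs)"
    unfolding milnor_rel_def using assms \<open>?a \<noteq> 0\<close> \<open>?a \<noteq> 1\<close>
    by (intro UnI2 CollectI exI[of _ "take i xs"] exI[of _ "drop (Suc (Suc i)) xs"] exI[of _ ?a])
      (auto simp: units_list_def dest: in_set_takeD in_set_dropD)
  then show ?thesis
    unfolding milnor_const_rels_def by (subst split) (blast intro: zgen_gen)
qed

lemma symb_const_hd_rels:
  assumes "c \<in> C" "c \<noteq> 0" "0 \<notin> set ys"
  shows "symb (c # ys) \<in> milnor_const_rels C (Suc (length ys))"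
proof -
  have "symb (c # ys) \<in> const_syms C (Suc (length ys))"
    unfolding const_syms_def using assms by (auto simp: units_list_def)
  then show ?thesis unfolding milnor_const_rels_def by (blast intro: zgen_gen)
qed

lemma symb_one_rels:
  assumes "i < length xs" "0 \<notin> set xs" "xs ! i = 1"
  shows "symb xs \<in> milnor_const_rels C (length xs)"
proof -
  have "xs[i := 1] = xs" using assms(3) list_update_id[of xs i] by simp
  then have "- symb xs \<in> milnor_const_rels C (length xs)"
    using symb_update_mult_rels[of i xs 1 1 C] assms by simp
  then show ?thesis by (simp add: rels_uminus_iff)
qed

text \<open>The classical identity {x, -x} = 0, from -x = (1 - x) / (1 - 1/x).\<close>

lemma symb_neg_adj_rels:
  assumes "Suc i < length xs" "0 \<notin> set xs" "xs ! i + xs ! Suc i = 0"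
  shows "symb xs \<in> milnor_const_rels C (length xs)"
proof (cases "xs ! i = 1")
  case True
  then show ?thesis using symb_one_rels[of i xs] assms by simp
next
  case False
  define x where "x = xs ! i"
  let ?R = "milnor_const_rels C (length xs)"
  have "x \<noteq> 0" using assms(1,2) by (simp add: x_def nth_nonzero)
  have "x \<noteq> 1" using False by (simp add: x_def)
  have xs_Suc: "xs ! Suc i = - x" using assms(3) unfolding x_def by (metis add.commute eq_neg_iff_add_eq_0)
  have factor_nonzero: "1 - 1 / x \<noteq> 0" using \<open>x \<noteq> 0\<close> \<open>x \<noteq> 1\<close> by (simp add: field_simps)
  have factor: "(- x) * (1 - 1 / x) = 1 - x" using \<open>x \<noteq> 0\<close> by (simp add: field_simps)
  define ys where "ys = xs[Suc i := 1 - 1 / x]"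
  have "length ys = length xs" "0 \<notin> set ys" "ys ! i = x"
    using assms factor_nonzero by (simp_all add: ys_def x_def zero_notin_set_update)
  then have inv_split: "symb (ys[i := 1]) - symb ys - symb (ys[i := 1 / x]) \<in> ?R"
    using symb_update_mult_rels[of i ys x "1 / x" C] assms \<open>x \<noteq> 0\<close> list_update_id[of ys i] by simp
  have "symb (ys[i := 1]) \<in> ?R"
    using symb_one_rels[of i "ys[i := 1]" C] assms \<open>length ys = length xs\<close> \<open>0 \<notin> set ys\<close>
    by (simp add: zero_notin_set_update)
  moreover have "symb (ys[i := 1 / x]) \<in> ?R"
    using symb_steinberg_adj_rels[of i "ys[i := 1 / x]" C] assms \<open>length ys = length xs\<close> \<open>0 \<notin> set ys\<close> \<open>x \<noteq> 0\<close>
    by (simp add: zero_notin_set_update ys_def)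
  ultimately have ys_rel: "symb ys \<in> ?R"
    using rels_diff[OF rels_diff[OF _ inv_split]] by fastforce
  have "xs[Suc i := - x] = xs" using xs_Suc list_update_id[of xs "Suc i"] by simp
  then have "symb (xs[Suc i := 1 - x]) - symb xs - symb ys \<in> ?R"
    using symb_update_mult_rels[of "Suc i" xs "- x" "1 - 1 / x" C] assms \<open>x \<noteq> 0\<close> factor_nonzero
    unfolding factor ys_def by simp
  moreover have "symb (xs[Suc i := 1 - x]) \<in> ?R"
    using symb_steinberg_adj_rels[of i "xs[Suc i := 1 - x]" C] assms \<open>x \<noteq> 1\<close>
    by (simp add: x_def zero_notin_set_update)
  ultimately show ?thesis
    using rels_diff[OF rels_diff] ys_rel by fastforce
qed

lemma symb_swap_adj_rels:
  assumes "Suc i < length xs" "0 \<notin> set xs"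
  shows "symb xs + symb (xs[i := xs ! Suc i, Suc i := xs ! i]) \<in> milnor_const_rels C (length xs)"
proof -
  define a where "a = xs ! i"
  define b where "b = xs ! Suc i"
  define S where "S p q = symb (xs[i := p, Suc i := q])" for p q
  let ?R = "milnor_const_rels C (length xs)"
  have "a \<noteq> 0" "b \<noteq> 0" using nth_nonzero[OF assms(2)] assms(1) by (auto simp: a_def b_def)
  have swap: "xs[i := p, Suc i := q] = xs[Suc i := q, i := p]" for p q
    by (simp add: list_update_swap)
  have nonzero: "0 \<notin> set (xs[i := p, Suc i := q])" if "p \<noteq> 0" "q \<noteq> 0" for p q
    using that assms(2) by (simp add: zero_notin_set_update)
  have neg: "S p (- p) \<in> ?R" if "p \<noteq> 0" for p
    unfolding S_def using symb_neg_adj_rels[of i "xs[i := p, Suc i := - p]" C] assms that nonzero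
    by simp
  have "S (a * b) (- (a * b)) - S a (- (a * b)) - S b (- (a * b)) \<in> ?R"
    unfolding S_def swap using symb_update_mult_rels[of i "xs[Suc i := - (a * b)]" a b C] assms
      \<open>a \<noteq> 0\<close> \<open>b \<noteq> 0\<close> by (simp add: zero_notin_set_update)
  moreover have "S a (- (a * b)) - S a (- a) - S a b \<in> ?R"
    unfolding S_def using symb_update_mult_rels[of "Suc i" "xs[i := a]" "- a" b C] assms
      \<open>a \<noteq> 0\<close> \<open>b \<noteq> 0\<close> by (simp add: zero_notin_set_update)
  moreover have "S b (- (a * b)) - S b a - S b (- b) \<in> ?R"
    unfolding S_def using symb_update_mult_rels[of "Suc i" "xs[i := b]" a "- b" C] assms
      \<open>a \<noteq> 0\<close> \<open>b \<noteq> 0\<close> by (simp add: zero_notin_set_update)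
  moreover have "S a b + S b a = S (a * b) (- (a * b))
      - (S (a * b) (- (a * b)) - S a (- (a * b)) - S b (- (a * b)))
      - (S a (- (a * b)) - S a (- a) - S a b) - (S b (- (a * b)) - S b a - S b (- b))
      - S a (- a) - S b (- b)"
    by (simp add: algebra_simps)
  moreover have "symb xs + symb (xs[i := xs ! Suc i, Suc i := xs ! i]) = S a b + S b a"
    unfolding S_def a_def b_def by simp
  ultimately show ?thesis
    using neg \<open>a \<noteq> 0\<close> \<open>b \<noteq> 0\<close> by (metis rels_diff mult_eq_0_iff)
qed

lemma symb_rels_of_adjacent:
  assumes sym: "\<And>u v. Q u v \<Longrightarrow> Q v u"
    and adj: "\<And>ys k. length ys = length xs \<Longrightarrow> Suc k < length ys \<Longrightarrow> 0 \<notin> set ys \<Longrightarrow>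
               Q (ys ! k) (ys ! Suc k) \<Longrightarrow> symb ys \<in> milnor_const_rels C (length xs)"
    and "i \<noteq> j" "i < length xs" "j < length xs" "0 \<notin> set xs" "Q (xs ! i) (xs ! j)"
  shows "symb xs \<in> milnor_const_rels C (length xs)"
proof -
  let ?R = "milnor_const_rels C (length xs)"
  have ordered: "symb zs \<in> ?R"
    if "i < j" "j < length zs" "length zs = length xs" "0 \<notin> set zs" "Q (zs ! i) (zs ! j)" for i j zs
    using that
  proof (induction "j - i" arbitrary: zs j)
    case 0
    then show ?case by simp
  next
    case (Suc d)
    show ?case
    proof (cases "j = Suc i")
      case True
      then show ?thesis using adj[of zs i] Suc.prems by simp
    next
      case False
      define j' where "j' = j - 1"
      have j': "j = Suc j'" "i < j'" using Suc.prems(1) False by (auto simp: j'_def)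
      define ys where "ys = zs[j' := zs ! j, j := zs ! j']"
      have "zs ! j \<noteq> 0" "zs ! j' \<noteq> 0"
        using nth_nonzero[OF Suc.prems(4)] Suc.prems(2) j' by auto
      then have "0 \<notin> set ys" unfolding ys_def using Suc.prems(4) by (intro zero_notin_set_update)
      moreover have "ys ! i = zs ! i" "ys ! j' = zs ! j" "length ys = length zs"
        using j' Suc.prems by (simp_all add: ys_def)
      ultimately have "symb ys \<in> ?R"
        using Suc.hyps(1)[of j' ys] Suc.hyps(2) Suc.prems j' by simp
      moreover have "symb zs + symb ys \<in> ?R"
        using symb_swap_adj_rels[of j' zs C] Suc.prems j' by (simp add: ys_def)
      ultimately show ?thesis using rels_diff by fastforce
    qed
  qed
  show ?thesis
  proof (cases "i < j")
    case True
    then show ?thesis using ordered assms by blast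
  next
    case False
    then show ?thesis using ordered[of j i xs] assms by fastforce
  qed
qed

lemma symb_const_rels:
  assumes "i < length xs" "0 \<notin> set xs" "xs ! i \<in> C"
  shows "symb xs \<in> milnor_const_rels C (length xs)"
  using assms
proof (induction i arbitrary: xs)
  case 0
  then obtain y ys where "xs = y # ys" by (cases xs) auto
  then show ?case using symb_const_hd_rels[of y C ys] 0 by auto
next
  case (Suc i)
  define ys where "ys = xs[i := xs ! Suc i, Suc i := xs ! i]"
  have "0 \<notin> set ys"
    unfolding ys_def using Suc.prems nth_nonzero[OF Suc.prems(2)] by (intro zero_notin_set_update) auto
  moreover have "ys ! i = xs ! Suc i" "length ys = length xs"
    using Suc.prems by (simp_all add: ys_def)
  ultimately have "symb ys \<in> milnor_const_rels C (length xs)"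
    using Suc.IH[of ys] Suc.prems by simp
  moreover have "symb xs + symb ys \<in> milnor_const_rels C (length xs)"
    using symb_swap_adj_rels[of i xs C] Suc.prems by (simp add: ys_def)
  ultimately show ?case using rels_diff by fastforce
qed

lemma symb_steinberg_rels:
  fixes xs :: "'k::field list"
  assumes "i \<noteq> j" "i < length xs" "j < length xs" "0 \<notin> set xs" "xs ! i + xs ! j = 1"
  shows "symb xs \<in> milnor_const_rels C (length xs)"
proof (rule symb_rels_of_adjacent[of "\<lambda>u v. u + v = 1" xs C i j])
  fix ys :: "'k list" and k
  assume "length ys = length xs" "Suc k < length ys" "0 \<notin> set ys" "ys ! k + ys ! Suc k = 1"
  then show "symb ys \<in> milnor_const_rels C (length xs)" using symb_steinberg_adj_rels[of k ys C] by simp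
qed (use assms in \<open>auto simp: add.commute\<close>)

lemma symb_neg_rels:
  fixes xs :: "'k::field list"
  assumes "i \<noteq> j" "i < length xs" "j < length xs" "0 \<notin> set xs" "xs ! i + xs ! j = 0"
  shows "symb xs \<in> milnor_const_rels C (length xs)"
proof (rule symb_rels_of_adjacent[of "\<lambda>u v. u + v = 0" xs C i j])
  fix ys :: "'k list" and k
  assume "length ys = length xs" "Suc k < length ys" "0 \<notin> set ys" "ys ! k + ys ! Suc k = 0"
  then show "symb ys \<in> milnor_const_rels C (length xs)" using symb_neg_adj_rels[of k ys C] by simp
qed (use assms in \<open>auto simp: add.commute\<close>)

text \<open>{x, x} = {x, -1}, a constant symbol once -1 \<in> C.\<close>

lemma symb_eq_rels:
  assumes "i \<noteq> j" "i < length xs" "j < length xs" "0 \<notin> set xs" "xs ! i = xs ! j" "- 1 \<in> C"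
  shows "symb xs \<in> milnor_const_rels C (length xs)"
proof -
  define x where "x = xs ! j"
  let ?R = "milnor_const_rels C (length xs)"
  have "x \<noteq> 0" using nth_nonzero[OF assms(4,3)] by (simp add: x_def)
  have "xs[j := (- x) * (- 1)] = xs" by (simp add: x_def)
  then have split: "symb xs - symb (xs[j := - x]) - symb (xs[j := - 1]) \<in> ?R"
    using symb_update_mult_rels[of j xs "- x" "- 1" C] assms \<open>x \<noteq> 0\<close> by simp
  have "symb (xs[j := - x]) \<in> ?R"
    using symb_neg_rels[of i j "xs[j := - x]" C] assms \<open>x \<noteq> 0\<close> by (simp add: x_def zero_notin_set_update)
  moreover have "symb (xs[j := - 1]) \<in> ?R"
    using symb_const_rels[of j "xs[j := - 1]" C] assms by (simp add: zero_notin_set_update)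
  ultimately have "(symb xs - symb (xs[j := - x]) - symb (xs[j := - 1])) + symb (xs[j := - x])
      + symb (xs[j := - 1]) \<in> ?R"
    using rels_add[OF rels_add[OF split]] by blast
  then show ?thesis by simp
qed

definition divide_entries :: "nat set \<Rightarrow> 'k::field list \<Rightarrow> 'k \<Rightarrow> 'k list" where
  "divide_entries P xs w = map (\<lambda>i. if i \<in> P then xs ! i / w else xs ! i) [0..<length xs]"

lemma length_divide_entries [simp]: "length (divide_entries P xs w) = length xs"
  by (simp add: divide_entries_def)

lemma nth_divide_entries:
  "i < length xs \<Longrightarrow> divide_entries P xs w ! i = (if i \<in> P then xs ! i / w else xs ! i)"
  by (simp add: divide_entries_def)

lemma zero_notin_set_divide_entries:
  "0 \<notin> set xs \<Longrightarrow> w \<noteq> 0 \<Longrightarrow> 0 \<notin> set (divide_entries P xs w)"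
  by (auto simp: divide_entries_def in_set_conv_nth)

lemma divide_entries_insert:
  "i < length xs \<Longrightarrow> divide_entries (insert i P) xs w = (divide_entries P xs w)[i := xs ! i / w]"
  by (rule nth_equalityI) (auto simp: nth_divide_entries nth_list_update)

text \<open>Each entry x is split as (x / w) * w; the symbols with entry w produced this way are those
  assumed to vanish.\<close>

lemma symb_divide_entries_rels:
  assumes "finite P" "P \<subseteq> {..<length xs} - {j}" "j < length xs" "0 \<notin> set xs" "w \<noteq> 0"
    and killed: "\<And>zs i. length zs = length xs \<Longrightarrow> 0 \<notin> set zs \<Longrightarrow> zs ! j = xs ! j \<Longrightarrow>
      i < length xs \<Longrightarrow> i \<noteq> j \<Longrightarrow> zs ! i = w \<Longrightarrow> symb zs \<in> milnor_const_rels C (length xs)"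
  shows "symb xs - symb (divide_entries P xs w) \<in> milnor_const_rels C (length xs)"
  using assms(1,2)
proof (induction P rule: finite_induct)
  case empty
  have "divide_entries {} xs w = xs" by (rule nth_equalityI) (auto simp: nth_divide_entries)
  then show ?case by (simp add: milnor_const_rels_def zgen_zero)
next
  case (insert i P)
  let ?R = "milnor_const_rels C (length xs)"
  define A where "A = divide_entries P xs w"
  define B where "B = divide_entries (insert i P) xs w"
  have i: "i < length xs" "i \<noteq> j" using insert.prems by auto
  have B: "B = A[i := xs ! i / w]" unfolding A_def B_def using i(1) by (rule divide_entries_insert)
  have "xs ! i / w \<noteq> 0" using nth_nonzero[OF assms(4) i(1)] assms(5) by simp
  have "0 \<notin> set B" unfolding B_def using assms(4,5) by (rule zero_notin_set_divide_entries)
  have "A ! i = xs ! i" unfolding A_def using i insert.hyps(2) by (simp add: nth_divide_entries)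
  then have "B[i := xs ! i / w * w] = A" using assms(5) list_update_id[of A i] by (simp add: B)
  then have "symb A - symb B - symb (B[i := w]) \<in> ?R"
    using symb_update_mult_rels[of i B "xs ! i / w" w C] i \<open>0 \<notin> set B\<close> \<open>xs ! i / w \<noteq> 0\<close> assms(5)
    by (simp add: B A_def)
  moreover have "symb (B[i := w]) \<in> ?R"
  proof -
    have "j \<notin> insert i P" using insert.prems i by auto
    then have "B ! j = xs ! j" unfolding B_def using assms(3) by (simp add: nth_divide_entries)
    then show ?thesis
      using killed[of "B[i := w]" i] i \<open>0 \<notin> set B\<close> assms(5) by (simp add: zero_notin_set_update B_def)
  qed
  moreover have "symb xs - symb A \<in> ?R" using insert.IH insert.prems by (simp add: A_def)
  ultimately show ?case
    using rels_add[OF rels_add] unfolding B_def[symmetric] by fastforce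
qed

lemma sum_fun_upd_zero:
  fixes f g :: "nat \<Rightarrow> 'a::comm_ring_1"
  assumes "j < n"
  shows "(\<Sum>i<n. (f(j := 0)) i * g i) = (\<Sum>i<n. f i * g i) - f j * g j"
proof -
  have "(\<Sum>i<n. (f(j := 0)) i * g i) = (\<Sum>i<n. f i * g i - (if i = j then f j * g j else 0))"
    by (rule sum.cong) auto
  then show ?thesis using assms by (simp add: sum_subtractf)
qed

text \<open>Divide all entries but the j-th by the j-th one; this produces symbols containing g_j twice.\<close>

lemma linear_relation_reduce:
  assumes "- 1 \<in> C" "0 \<notin> set gs" "j < length gs" "(\<Sum>i<length gs. \<mu> i * gs ! i) = 0"
  obtains hs where "length hs = length gs" "0 \<notin> set hs"
    "symb gs - symb hs \<in> milnor_const_rels C (length gs)"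
    "\<mu> j + (\<Sum>i<length gs. (\<mu>(j := 0)) i * hs ! i) = 0"
proof
  define n where "n = length gs"
  define hs where "hs = divide_entries ({..<n} - {j}) gs (gs ! j)"
  have "gs ! j \<noteq> 0" using nth_nonzero[OF assms(2,3)] .
  show "length hs = length gs" by (simp add: hs_def)
  show "0 \<notin> set hs" unfolding hs_def using assms(2) \<open>gs ! j \<noteq> 0\<close> by (rule zero_notin_set_divide_entries)
  show "symb gs - symb hs \<in> milnor_const_rels C (length gs)"
    unfolding hs_def n_def
  proof (rule symb_divide_entries_rels)
    fix zs :: "'a list" and i
    assume "length zs = length gs" "0 \<notin> set zs" "zs ! j = gs ! j" "i < length gs" "i \<noteq> j" "zs ! i = gs ! j"
    then show "symb zs \<in> milnor_const_rels C (length gs)"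
      using symb_eq_rels[of i j zs C] assms(1,3) by simp
  qed (use assms \<open>gs ! j \<noteq> 0\<close> in auto)
  have "(\<Sum>i<n. (\<mu>(j := 0)) i * hs ! i) = (\<Sum>i<n. \<mu> i * gs ! i / gs ! j - (if i = j then \<mu> j else 0))"
    using \<open>gs ! j \<noteq> 0\<close> by (intro sum.cong) (auto simp: hs_def nth_divide_entries n_def)
  also have "\<dots> = (\<Sum>i<n. \<mu> i * gs ! i) / gs ! j - \<mu> j"
    using assms(3) by (simp add: sum_subtractf sum_divide_distrib n_def)
  finally show "\<mu> j + (\<Sum>i<length gs. (\<mu>(j := 0)) i * hs ! i) = 0"
    using assms(4) by (simp add: n_def)
qed

lemma symb_const_factor_rels:
  assumes "j < length gs" "0 \<notin> set gs" "c \<in> C" "c \<noteq> 0" "u \<noteq> 0" "gs ! j = c * u"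
  shows "symb gs - symb (gs[j := u]) \<in> milnor_const_rels C (length gs)"
proof -
  let ?R = "milnor_const_rels C (length gs)"
  have "gs[j := c * u] = gs" using assms(6) list_update_id[of gs j] by simp
  then have "symb gs - symb (gs[j := c]) - symb (gs[j := u]) \<in> ?R"
    using symb_update_mult_rels[of j gs c u C] assms by simp
  moreover have "symb (gs[j := c]) \<in> ?R"
    using symb_const_rels[of j "gs[j := c]" C] assms by (simp add: zero_notin_set_update)
  ultimately show ?thesis using rels_add by fastforce
qed

text \<open>Write g_j = c u with c constant and w = 1 - u, so that nu w = nu + mu_j g_j; then divide the
  other entries by w, which produces symbols containing both u and 1 - u.\<close>

lemma affine_relation_reduce:
  assumes "- \<nu> / \<mu> j \<in> C" "0 \<notin> set gs" "j < length gs" "\<nu> \<noteq> 0" "\<mu> j \<noteq> 0"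
    "\<nu> + \<mu> j * gs ! j \<noteq> 0" "\<nu> + (\<Sum>i<length gs. \<mu> i * gs ! i) = 0"
  obtains hs where "length hs = length gs" "0 \<notin> set hs"
    "symb gs - symb hs \<in> milnor_const_rels C (length gs)"
    "\<nu> + (\<Sum>i<length gs. (\<mu>(j := 0)) i * hs ! i) = 0"
proof
  define n where "n = length gs"
  let ?R = "milnor_const_rels C n"
  define c where "c = - \<nu> / \<mu> j"
  define u where "u = - \<mu> j * gs ! j / \<nu>"
  define w where "w = 1 - u"
  define hs where "hs = divide_entries ({..<n} - {j}) (gs[j := u]) w"
  have "gs ! j \<noteq> 0" using nth_nonzero[OF assms(2,3)] .
  have "c \<noteq> 0" "u \<noteq> 0" using assms(4,5) \<open>gs ! j \<noteq> 0\<close> by (simp_all add: c_def u_def)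
  have w: "\<nu> * w = \<nu> + \<mu> j * gs ! j" using assms(4) by (simp add: w_def u_def field_simps)
  then have "w \<noteq> 0" using assms(6) by auto
  have "gs ! j = c * u" using assms(4,5) by (simp add: c_def u_def field_simps)
  then have to_u: "symb gs - symb (gs[j := u]) \<in> ?R"
    using symb_const_factor_rels[of j gs c C u] assms(1,2,3) \<open>c \<noteq> 0\<close> \<open>u \<noteq> 0\<close> by (simp add: c_def n_def)
  have "0 \<notin> set (gs[j := u])" using assms(2) \<open>u \<noteq> 0\<close> by (rule zero_notin_set_update)
  have "symb (gs[j := u]) - symb hs \<in> ?R"
    unfolding hs_def n_def
  proof (rule symb_divide_entries_rels[where xs = "gs[j := u]", simplified])
    fix zs :: "'a list" and i
    assume "length zs = length gs" "0 \<notin> set zs" "zs ! j = gs[j := u] ! j" "i < length gs" "i \<noteq> j"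
      "zs ! i = w"
    then show "symb zs \<in> milnor_const_rels C (length gs)"
      using symb_steinberg_rels[of j i zs C] assms(3) by (simp add: w_def)
  qed (use assms \<open>w \<noteq> 0\<close> \<open>0 \<notin> set (gs[j := u])\<close> in auto)
  then show "symb gs - symb hs \<in> milnor_const_rels C (length gs)"
    using rels_add[OF to_u] by (fastforce simp: n_def)
  show "length hs = length gs" by (simp add: hs_def)
  show "0 \<notin> set hs"
    unfolding hs_def using \<open>0 \<notin> set (gs[j := u])\<close> \<open>w \<noteq> 0\<close> by (rule zero_notin_set_divide_entries)
  have "(\<Sum>i<n. (\<mu>(j := 0)) i * hs ! i) = (\<Sum>i<n. (\<mu>(j := 0)) i * gs ! i) / w"
    unfolding sum_divide_distrib by (intro sum.cong) (auto simp: hs_def nth_divide_entries n_def)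
  also have "\<dots> = (- \<nu> - \<mu> j * gs ! j) / w"
  proof -
    have "(\<Sum>i<n. \<mu> i * gs ! i) = - \<nu>" using assms(7) by (simp add: eq_neg_iff_add_eq_0 add.commute n_def)
    then show ?thesis using sum_fun_upd_zero[of j n \<mu> "\<lambda>i. gs ! i"] assms(3) by (simp add: n_def)
  qed
  also have "\<dots> = - \<nu>"
    using w \<open>w \<noteq> 0\<close> by (metis add_uminus_conv_diff minus_add_distrib minus_mult_left nonzero_mult_div_cancel_right)
  finally show "\<nu> + (\<Sum>i<length gs. (\<mu>(j := 0)) i * hs ! i) = 0" by (simp add: n_def)
qed

lemma affine_relation_step:
  assumes "- 1 \<in> C" "0 \<in> C" "- \<nu> / \<mu> j \<in> C" "\<nu> \<in> C" "\<mu> j \<in> C"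
    "0 \<notin> set gs" "j < length gs" "\<mu> j \<noteq> 0" "\<nu> + (\<Sum>i<length gs. \<mu> i * gs ! i) = 0"
  obtains hs \<nu>' where "length hs = length gs" "0 \<notin> set hs" "\<nu>' \<in> C"
    "symb gs - symb hs \<in> milnor_const_rels C (length gs)"
    "\<nu>' + (\<Sum>i<length gs. (\<mu>(j := 0)) i * hs ! i) = 0"
proof -
  consider "\<nu> = 0" | "\<nu> + \<mu> j * gs ! j = 0" | "\<nu> \<noteq> 0" "\<nu> + \<mu> j * gs ! j \<noteq> 0" by blast
  then show ?thesis
  proof cases
    case 1
    with linear_relation_reduce[of C gs j \<mu>] show ?thesis using that[of _ "\<mu> j"] assms by auto
  next
    case 2
    have "(\<Sum>i<length gs. (\<mu>(j := 0)) i * gs ! i) = (\<Sum>i<length gs. \<mu> i * gs ! i) - \<mu> j * gs ! j"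
      using assms(7) by (rule sum_fun_upd_zero)
    also have "\<dots> = 0" using 2 assms(9) by (metis add_left_cancel diff_self)
    finally show ?thesis using that[of gs 0] assms by (simp add: milnor_const_rels_def zgen_zero)
  next
    case 3
    with affine_relation_reduce[of \<nu> \<mu> j C gs] show ?thesis using that[of _ \<nu>] assms by auto
  qed
qed

lemma symb_rels_of_affine_relation:
  assumes mult: "\<And>x y. x \<in> C \<Longrightarrow> y \<in> C \<Longrightarrow> x * y \<in> C"
    and inverse: "\<And>x. x \<in> C \<Longrightarrow> inverse x \<in> C"
    and uminus: "\<And>x. x \<in> C \<Longrightarrow> - x \<in> C"
    and "0 \<in> C" "1 \<in> C"
  shows "0 \<notin> set gs \<Longrightarrow> \<nu> \<in> C \<Longrightarrow> \<forall>i<length gs. \<mu> i \<in> C \<Longrightarrow>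
    \<nu> + (\<Sum>i<length gs. \<mu> i * gs ! i) = 0 \<Longrightarrow> \<exists>i<length gs. \<mu> i \<noteq> 0 \<Longrightarrow>
    symb gs \<in> milnor_const_rels C (length gs)"
proof (induction "card {i. i < length gs \<and> \<mu> i \<noteq> 0}" arbitrary: gs \<nu> \<mu> rule: less_induct)
  case less
  define n where "n = length gs"
  obtain j where j: "j < n" "\<mu> j \<noteq> 0" using less.prems(5) n_def by blast
  have const_quot: "- x / \<mu> j \<in> C" if "x \<in> C" for x
    using mult[OF uminus[OF that] inverse] less.prems(3) j n_def by (simp add: divide_inverse)
  show ?case
  proof (cases "\<exists>k<n. k \<noteq> j \<and> \<mu> k \<noteq> 0")
    case False
    then have "(\<Sum>i<n. (\<mu>(j := 0)) i * gs ! i) = 0" by (intro sum.neutral) auto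
    then have "\<nu> + \<mu> j * gs ! j = 0"
      using sum_fun_upd_zero[of j n \<mu> "\<lambda>i. gs ! i"] less.prems(4) j(1) n_def by simp
    then have "gs ! j = - \<nu> / \<mu> j" using j(2) by (simp add: field_simps add_eq_0_iff)
    then show ?thesis using symb_const_rels[of j gs C] const_quot[OF less.prems(2)] less.prems(1) j n_def by simp
  next
    case True
    define \<mu>' where "\<mu>' = \<mu>(j := 0)"
    have fewer: "card {i. i < length gs \<and> \<mu>' i \<noteq> 0} < card {i. i < length gs \<and> \<mu> i \<noteq> 0}"
      unfolding \<mu>'_def using j n_def by (intro psubset_card_mono) auto
    have "\<exists>i<length gs. \<mu>' i \<noteq> 0" using True n_def by (auto simp: \<mu>'_def)
    moreover have "\<forall>i<length gs. \<mu>' i \<in> C" using less.prems(3) \<open>0 \<in> C\<close> by (simp add: \<mu>'_def)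
    moreover obtain hs \<nu>' where "length hs = n" "0 \<notin> set hs" "\<nu>' \<in> C"
      "symb gs - symb hs \<in> milnor_const_rels C n" "\<nu>' + (\<Sum>i<n. \<mu>' i * hs ! i) = 0"
      using affine_relation_step[of C \<nu> \<mu> j gs] uminus[OF \<open>1 \<in> C\<close>] \<open>0 \<in> C\<close> const_quot
        less.prems j n_def unfolding \<mu>'_def by blast
    ultimately have "symb hs \<in> milnor_const_rels C n"
      using less.hyps[of hs \<mu>' \<nu>'] fewer \<open>length hs = n\<close> n_def by simp
    then show ?thesis using rels_cong \<open>symb gs - symb hs \<in> milnor_const_rels C n\<close> n_def by blast
  qed
qed

section \<open>A determinant invariant of symbols\<close>

lemma det_zero_row:
  assumes "k < n" "\<And>i. i < n \<Longrightarrow> f i \<in> carrier_vec n" "f k = 0\<^sub>v n"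
  shows "det (mat\<^sub>r n n f) = (0 :: 'a :: comm_ring_1)"
proof -
  have "mat\<^sub>r n n f = mat\<^sub>r n n (\<lambda>i. if i = k then 0\<^sub>v n else f i)"
    by (rule arg_cong[where f = "mat\<^sub>r n n"]) (auto simp: assms(3))
  also have "det \<dots> = 0" by (rule det_row_0) (use assms in auto)
  finally show ?thesis .
qed

text \<open>A map v with these properties induces, via the determinant of the first n coordinates
  of v x_1, ..., v x_n, a homomorphism K^M_n / C.K^M_(n-1) -> Z.\<close>

locale symbol_valuation =
  fixes v :: "'k::field \<Rightarrow> nat \<Rightarrow> int" and C :: "'k set" and n :: nat
  assumes v_mult: "x \<noteq> 0 \<Longrightarrow> y \<noteq> 0 \<Longrightarrow> v (x * y) = v x + v y"
    and v_const: "c \<in> C \<Longrightarrow> c \<noteq> 0 \<Longrightarrow> v c = 0"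
    and v_steinberg: "u \<noteq> 0 \<Longrightarrow> u \<noteq> 1 \<Longrightarrow> v u = 0 \<or> v (1 - u) = 0 \<or> v u = v (1 - u)"
begin

definition val_vec :: "'k \<Rightarrow> int vec" where
  "val_vec x = vec n (v x)"

definition val_det :: "'k list \<Rightarrow> int" where
  "val_det xs = (if length xs = n then det (mat\<^sub>r n n (\<lambda>i. val_vec (xs ! i))) else 0)"

definition val_det_linear :: "('k list \<Rightarrow>\<^sub>0 int) \<Rightarrow> int" where
  "val_det_linear c = (\<Sum>xs\<in>Poly_Mapping.keys c. Poly_Mapping.lookup c xs * val_det xs)"

lemma val_det_linear_superset:
  "finite S \<Longrightarrow> Poly_Mapping.keys c \<subseteq> S \<Longrightarrow>
    val_det_linear c = (\<Sum>xs\<in>S. Poly_Mapping.lookup c xs * val_det xs)"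
  unfolding val_det_linear_def by (rule sum.mono_neutral_left) (auto simp: in_keys_iff)

lemma val_det_linear_diff: "val_det_linear (a - b) = val_det_linear a - val_det_linear b"
proof -
  let ?S = "Poly_Mapping.keys a \<union> Poly_Mapping.keys b"
  have "val_det_linear (a - b) = (\<Sum>xs\<in>?S. Poly_Mapping.lookup (a - b) xs * val_det xs)"
    by (rule val_det_linear_superset) (use keys_diff[of a b] in auto)
  also have "\<dots> = (\<Sum>xs\<in>?S. Poly_Mapping.lookup a xs * val_det xs)
      - (\<Sum>xs\<in>?S. Poly_Mapping.lookup b xs * val_det xs)"
    by (simp add: lookup_minus algebra_simps sum_subtractf)
  also have "\<dots> = val_det_linear a - val_det_linear b"
    using val_det_linear_superset[of ?S a] val_det_linear_superset[of ?S b] by simp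
  finally show ?thesis .
qed

lemma val_det_linear_symb: "val_det_linear (symb xs) = val_det xs"
  by (simp add: val_det_linear_def symb_def)

lemma val_vec_carrier: "val_vec x \<in> carrier_vec n"
  by (simp add: val_vec_def)

lemma val_det_mult:
  assumes "length xs + 1 + length ys = n" "a \<noteq> 0" "b \<noteq> 0"
  shows "val_det (xs @ [a * b] @ ys) = val_det (xs @ [a] @ ys) + val_det (xs @ [b] @ ys)"
proof -
  let ?k = "length xs"
  let ?c = "\<lambda>i. val_vec ((xs @ [1] @ ys) ! i)"
  have rows: "mat\<^sub>r n n (\<lambda>i. val_vec ((xs @ [x] @ ys) ! i)) =
      mat\<^sub>r n n (\<lambda>i. if i = ?k then val_vec x else ?c i)" for x
    by (rule arg_cong[where f = "mat\<^sub>r n n"]) (auto simp: nth_append)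
  have mult: "val_vec (a * b) = val_vec a + val_vec b"
    by (rule eq_vecI) (simp_all add: val_vec_def v_mult assms(2,3))
  have "det (mat\<^sub>r n n (\<lambda>i. if i = ?k then val_vec a + val_vec b else ?c i)) =
      det (mat\<^sub>r n n (\<lambda>i. if i = ?k then val_vec a else ?c i)) +
      det (mat\<^sub>r n n (\<lambda>i. if i = ?k then val_vec b else ?c i))"
    using assms(1) by (intro det_row_add) (auto simp: val_vec_carrier)
  then show ?thesis
    using assms(1) unfolding val_det_def rows mult by simp
qed

lemma val_det_steinberg:
  assumes "length xs + 2 + length ys = n" "a \<noteq> 0" "a \<noteq> 1"
  shows "val_det (xs @ [a, 1 - a] @ ys) = 0"
proof -
  define zs where "zs = xs @ [a, 1 - a] @ ys"
  define k where "k = length xs"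
  have "k < n" "Suc k < n" using assms(1) by (auto simp: k_def)
  have z: "zs ! k = a" "zs ! Suc k = 1 - a" by (simp_all add: nth_append zs_def k_def)
  have zero_row: "det (mat\<^sub>r n n (\<lambda>i. val_vec (zs ! i))) = 0" if "i < n" "v (zs ! i) = 0" for i
    by (rule det_zero_row[OF that(1)]) (auto simp: val_vec_carrier val_vec_def that(2))
  consider "v a = 0" | "v (1 - a) = 0" | "v a = v (1 - a)" using v_steinberg[OF assms(2,3)] by blast
  then have "det (mat\<^sub>r n n (\<lambda>i. val_vec (zs ! i))) = 0"
  proof cases
    case 3
    have "row (mat\<^sub>r n n (\<lambda>i. val_vec (zs ! i))) i = val_vec (zs ! i)" if "i < n" for i
      using that by (simp add: val_vec_def)
    then show ?thesis
      by (intro det_identical_rows[OF _ _ \<open>k < n\<close> \<open>Suc k < n\<close>])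
        (auto simp: z 3 val_vec_def \<open>k < n\<close> \<open>Suc k < n\<close>)
  qed (use zero_row[of k] zero_row[of "Suc k"] \<open>k < n\<close> \<open>Suc k < n\<close> z in auto)
  then show ?thesis using assms(1) by (simp add: val_det_def zs_def)
qed

lemma val_det_const:
  assumes "c \<in> C" "c \<noteq> 0"
  shows "val_det (c # ys) = 0"
proof (cases "length (c # ys) = n")
  case True
  then have "det (mat\<^sub>r n n (\<lambda>i. val_vec ((c # ys) ! i))) = 0"
    by (intro det_zero_row[of 0]) (auto simp: val_vec_carrier val_vec_def v_const[OF assms])
  then show ?thesis by (simp add: val_det_def)
qed (simp add: val_det_def)

lemma val_det_linear_rels: "x \<in> milnor_const_rels C n \<Longrightarrow> val_det_linear x = 0"
  unfolding milnor_const_rels_def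
proof (induction rule: zgen.induct)
  case zgen_zero
  then show ?case by (simp add: val_det_linear_def)
next
  case (zgen_diff x y)
  then show ?case by (simp add: val_det_linear_diff)
next
  case (zgen_gen x)
  then consider
      (mult) xs ys a b where "x = symb (xs @ [a * b] @ ys) - symb (xs @ [a] @ ys) - symb (xs @ [b] @ ys)"
        "length xs + 1 + length ys = n" "a \<noteq> 0" "b \<noteq> 0"
    | (steinberg) xs ys a where "x = symb (xs @ [a, 1 - a] @ ys)" "length xs + 2 + length ys = n"
        "a \<noteq> 0" "a \<noteq> 1"
    | (const) c ys where "x = symb (c # ys)" "c \<in> C" "c \<noteq> 0"
    unfolding milnor_rel_def const_syms_def by blast
  then show ?case
  proof cases
    case mult
    then show ?thesis using val_det_mult[OF mult(2-4)] by (simp add: val_det_linear_diff val_det_linear_symb)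
  next
    case steinberg
    then show ?thesis using val_det_steinberg[OF steinberg(2-4)] by (simp add: val_det_linear_symb)
  next
    case const
    then show ?thesis using val_det_const[OF const(2,3)] by (simp add: val_det_linear_symb)
  qed
qed

lemma nonzero_class_if_val_det:
  assumes "length xs = n" "val_det xs \<noteq> 0"
  shows "nonzero_class_mod_const C xs"
  using val_det_linear_rels[of "symb xs"] val_det_linear_symb[of xs] assms
  by (auto simp: nonzero_class_mod_const_iff)

end

section \<open>Substitution and lowest monomials\<close>

abbreviation mconst :: "'a::comm_ring_1 \<Rightarrow> ('w, 'a) mpoly" where
  "mconst c \<equiv> Poly_Mapping.single 0 c"

definition mvar :: "'w \<Rightarrow> ('w, 'a::comm_ring_1) mpoly" where
  "mvar w = Poly_Mapping.single (Poly_Mapping.single w 1) 1"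

lemma single_Suc_0_nonzero [simp]: "Poly_Mapping.single x (Suc 0) \<noteq> 0"
  by (metis lookup_single_eq lookup_zero nat.distinct(1))

lemma single_Suc_0_eq_iff [simp]:
  "Poly_Mapping.single x (Suc 0) = Poly_Mapping.single y (Suc 0) \<longleftrightarrow> x = y"
  by (metis lookup_single_eq lookup_single_not_eq nat.distinct(1))

lemma poly_mapping_single_expansion:
  "p = (\<Sum>m\<in>Poly_Mapping.keys p. Poly_Mapping.single m (Poly_Mapping.lookup p m))"
  by (rule poly_mapping_eqI) (simp add: lookup_sum lookup_single when_def in_keys_iff sum.delta')

lemma mconst_nonzero: "c \<noteq> 0 \<Longrightarrow> (mconst c :: ('w, 'a::comm_ring_1) mpoly) \<noteq> 0"
  by (metis lookup_single_eq lookup_zero)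

lemma mconst_sum: "mconst (sum f A) = (\<Sum>x\<in>A. mconst (f x) :: ('w, 'a::comm_ring_1) mpoly)"
  by (induction A rule: infinite_finite_induct) (simp_all add: single_add)

lemma lookup_mult_expansion:
  "Poly_Mapping.lookup (p * q) k = (\<Sum>m\<in>Poly_Mapping.keys p. \<Sum>m'\<in>Poly_Mapping.keys q.
     (Poly_Mapping.lookup p m * Poly_Mapping.lookup q m' when m + m' = k))"
proof -
  have "p * q = (\<Sum>m\<in>Poly_Mapping.keys p. Poly_Mapping.single m (Poly_Mapping.lookup p m))
      * (\<Sum>m'\<in>Poly_Mapping.keys q. Poly_Mapping.single m' (Poly_Mapping.lookup q m'))"
    using poly_mapping_single_expansion[of p] poly_mapping_single_expansion[of q] by simp
  then show ?thesis by (simp add: sum_product mult_single lookup_sum lookup_single)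
qed

lemma lookup_mconst_mult:
  "Poly_Mapping.lookup (mconst c * p) m = c * Poly_Mapping.lookup (p :: ('w, 'a::comm_ring_1) mpoly) m"
  by (simp add: lookup_mult_expansion[of "mconst c"] lookup_single when_def sum.delta' in_keys_iff)

definition subst_monom :: "('w \<Rightarrow> ('u, 'a::comm_ring_1) mpoly) \<Rightarrow> ('w \<Rightarrow>\<^sub>0 nat) \<Rightarrow> ('u, 'a) mpoly" where
  "subst_monom r m = (\<Prod>w\<in>Poly_Mapping.keys m. r w ^ Poly_Mapping.lookup m w)"

definition subst_mpoly :: "('w \<Rightarrow> ('u, 'a::comm_ring_1) mpoly) \<Rightarrow> ('w, 'a) mpoly \<Rightarrow> ('u, 'a) mpoly" where
  "subst_mpoly r p = (\<Sum>m\<in>Poly_Mapping.keys p. mconst (Poly_Mapping.lookup p m) * subst_monom r m)"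

lemma subst_monom_superset:
  "finite S \<Longrightarrow> Poly_Mapping.keys m \<subseteq> S \<Longrightarrow> subst_monom r m = (\<Prod>w\<in>S. r w ^ Poly_Mapping.lookup m w)"
  unfolding subst_monom_def by (rule prod.mono_neutral_left) (auto simp: in_keys_iff)

lemma subst_monom_add: "subst_monom r (m1 + m2) = subst_monom r m1 * subst_monom r m2"
proof -
  let ?S = "Poly_Mapping.keys m1 \<union> Poly_Mapping.keys m2"
  have "subst_monom r (m1 + m2) = (\<Prod>w\<in>?S. r w ^ Poly_Mapping.lookup (m1 + m2) w)"
    by (rule subst_monom_superset) (auto simp: keys_add)
  also have "\<dots> = (\<Prod>w\<in>?S. r w ^ Poly_Mapping.lookup m1 w) * (\<Prod>w\<in>?S. r w ^ Poly_Mapping.lookup m2 w)"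
    by (simp add: lookup_add power_add prod.distrib)
  also have "\<dots> = subst_monom r m1 * subst_monom r m2"
    using subst_monom_superset[of ?S m1 r] subst_monom_superset[of ?S m2 r] by simp
  finally show ?thesis .
qed

lemma subst_mpoly_superset:
  "finite S \<Longrightarrow> Poly_Mapping.keys p \<subseteq> S \<Longrightarrow>
    subst_mpoly r p = (\<Sum>m\<in>S. mconst (Poly_Mapping.lookup p m) * subst_monom r m)"
  unfolding subst_mpoly_def by (rule sum.mono_neutral_left) (auto simp: in_keys_iff)

lemma subst_mpoly_add: "subst_mpoly r (p + q) = subst_mpoly r p + subst_mpoly r q"
proof -
  let ?S = "Poly_Mapping.keys p \<union> Poly_Mapping.keys q"
  have "subst_mpoly r (p + q) = (\<Sum>m\<in>?S. mconst (Poly_Mapping.lookup (p + q) m) * subst_monom r m)"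
    by (rule subst_mpoly_superset) (auto simp: keys_add)
  also have "\<dots> = (\<Sum>m\<in>?S. mconst (Poly_Mapping.lookup p m) * subst_monom r m)
      + (\<Sum>m\<in>?S. mconst (Poly_Mapping.lookup q m) * subst_monom r m)"
    by (simp add: lookup_add single_add distrib_right sum.distrib)
  also have "\<dots> = subst_mpoly r p + subst_mpoly r q"
    using subst_mpoly_superset[of ?S p r] subst_mpoly_superset[of ?S q r] by simp
  finally show ?thesis .
qed

lemma subst_mpoly_zero [simp]: "subst_mpoly r 0 = 0"
  by (simp add: subst_mpoly_def)

lemma subst_mpoly_diff: "subst_mpoly r (p - q) = subst_mpoly r p - subst_mpoly r q"
  using subst_mpoly_add[of r "p - q" q] by (simp add: algebra_simps)

lemma subst_mpoly_sum: "subst_mpoly r (sum f A) = (\<Sum>x\<in>A. subst_mpoly r (f x))"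
  by (induction A rule: infinite_finite_induct) (auto simp: subst_mpoly_add)

lemma subst_mpoly_single:
  "subst_mpoly r (Poly_Mapping.single m c) = mconst c * subst_monom r m"
  using subst_mpoly_superset[of "{m}" "Poly_Mapping.single m c" r] by simp

lemma subst_mpoly_mconst [simp]: "subst_mpoly r (mconst c) = mconst c"
  by (simp add: subst_mpoly_single subst_monom_def)

lemma subst_mpoly_one [simp]: "subst_mpoly r 1 = 1"
  using subst_mpoly_mconst[of r 1] by simp

lemma subst_mpoly_mvar [simp]: "subst_mpoly r (mvar w) = r w"
  by (simp add: mvar_def subst_mpoly_single subst_monom_def)

lemma subst_mpoly_mult: "subst_mpoly r (p * q) = subst_mpoly r p * subst_mpoly r q"
proof -
  let ?P = "Poly_Mapping.keys p" and ?Q = "Poly_Mapping.keys q"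
  have "p * q = (\<Sum>m\<in>?P. Poly_Mapping.single m (Poly_Mapping.lookup p m))
      * (\<Sum>m'\<in>?Q. Poly_Mapping.single m' (Poly_Mapping.lookup q m'))"
    using poly_mapping_single_expansion[of p] poly_mapping_single_expansion[of q] by simp
  then have "subst_mpoly r (p * q) = (\<Sum>m\<in>?P. \<Sum>m'\<in>?Q.
      subst_mpoly r (Poly_Mapping.single m (Poly_Mapping.lookup p m))
      * subst_mpoly r (Poly_Mapping.single m' (Poly_Mapping.lookup q m')))"
    by (simp add: sum_product mult_single subst_mpoly_sum subst_mpoly_single subst_monom_add
        algebra_simps)
  also have "\<dots> = subst_mpoly r p * subst_mpoly r q"
    using arg_cong[OF poly_mapping_single_expansion[of p], of "subst_mpoly r"]
      arg_cong[OF poly_mapping_single_expansion[of q], of "subst_mpoly r"]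
    by (simp add: subst_mpoly_sum sum_product)
  finally show ?thesis .
qed

lemma subst_mpoly_power: "subst_mpoly r (p ^ k) = subst_mpoly r p ^ k"
  by (induction k) (simp_all add: subst_mpoly_mult)

lemma subst_mpoly_prod: "subst_mpoly r (prod f A) = (\<Prod>x\<in>A. subst_mpoly r (f x))"
  by (induction A rule: infinite_finite_induct) (auto simp: subst_mpoly_mult)

lemma subst_mpoly_subst_mpoly:
  "subst_mpoly r' (subst_mpoly r p) = subst_mpoly (\<lambda>w. subst_mpoly r' (r w)) p"
proof -
  have "subst_mpoly r' (subst_monom r m) = subst_monom (\<lambda>w. subst_mpoly r' (r w)) m" for m
    by (simp add: subst_monom_def subst_mpoly_prod subst_mpoly_power)
  then show ?thesis
    unfolding subst_mpoly_def[of r p] subst_mpoly_def[of "\<lambda>w. subst_mpoly r' (r w)" p]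
    by (simp add: subst_mpoly_sum subst_mpoly_mult)
qed

lemma subst_monom_mvar: "subst_monom mvar m = (Poly_Mapping.single m 1 :: ('w, 'a::comm_ring_1) mpoly)"
proof -
  have power: "mvar w ^ k = (Poly_Mapping.single (Poly_Mapping.single w k) 1 :: ('w, 'a) mpoly)" for w k
    by (induction k) (simp_all add: mvar_def mult_single single_add[symmetric])
  have single_prod: "(\<Prod>x\<in>A. Poly_Mapping.single (f x) (1::'a)) = Poly_Mapping.single (sum f A) 1"
    for A and f :: "'w \<Rightarrow> 'w \<Rightarrow>\<^sub>0 nat"
    by (induction A rule: infinite_finite_induct) (simp_all add: mult_single)
  have "subst_monom mvar m = (\<Prod>w\<in>Poly_Mapping.keys m.
      Poly_Mapping.single (Poly_Mapping.single w (Poly_Mapping.lookup m w)) (1::'a))"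
    by (simp add: subst_monom_def power)
  also have "\<dots> = Poly_Mapping.single (\<Sum>w\<in>Poly_Mapping.keys m. Poly_Mapping.single w (Poly_Mapping.lookup m w)) 1"
    by (rule single_prod)
  finally show ?thesis using poly_mapping_single_expansion[of m] by simp
qed

lemma subst_mpoly_mvar_id [simp]: "subst_mpoly mvar p = p"
  unfolding subst_mpoly_def subst_monom_mvar
  by (simp add: mult_single poly_mapping_single_expansion[symmetric])

definition lowest_monom :: "('u::linorder, 'a::idom) mpoly \<Rightarrow> ('u \<Rightarrow>\<^sub>0 nat)" where
  "lowest_monom p = Min (Poly_Mapping.keys p)"

lemma lowest_monom_in_keys: "p \<noteq> 0 \<Longrightarrow> lowest_monom p \<in> Poly_Mapping.keys p"
  unfolding lowest_monom_def by (rule Min_in) auto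

lemma lowest_monom_le: "m \<in> Poly_Mapping.keys p \<Longrightarrow> lowest_monom p \<le> m"
  unfolding lowest_monom_def by (rule Min_le) auto

lemma lowest_monom_eqI:
  "m \<in> Poly_Mapping.keys p \<Longrightarrow> (\<And>m'. m' \<in> Poly_Mapping.keys p \<Longrightarrow> m \<le> m') \<Longrightarrow> lowest_monom p = m"
  unfolding lowest_monom_def by (rule Min_eqI) auto

lemma lowest_monom_uminus [simp]: "lowest_monom (- p) = lowest_monom p"
  by (simp add: lowest_monom_def)

lemma zero_le_monom: "(0 :: 'u::linorder \<Rightarrow>\<^sub>0 nat) \<le> m"
proof (rule ccontr)
  assume "\<not> 0 \<le> m"
  then have "m < 0" by simp
  then have "less_fun (Poly_Mapping.lookup m) (Poly_Mapping.lookup 0)"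
    by (simp add: less_poly_mapping.rep_eq)
  then show False by (auto simp: less_fun_def)
qed

lemma lowest_monom_eq_0: "Poly_Mapping.lookup p 0 \<noteq> 0 \<Longrightarrow> lowest_monom p = 0"
  by (rule lowest_monom_eqI) (auto simp: zero_le_monom in_keys_iff)

lemma lowest_monom_mvar: "lowest_monom (mvar u :: ('u::linorder, 'a::idom) mpoly) = Poly_Mapping.single u 1"
  by (rule lowest_monom_eqI) (auto simp: mvar_def)

text \<open>The product of the lowest coefficients is the only contribution to the coefficient of
  lowest_monom p + lowest_monom q in p * q, since the monomial order is compatible with addition.\<close>

lemma lowest_monom_mult:
  fixes p q :: "('u::linorder, 'a::idom) mpoly"
  assumes "p \<noteq> 0" "q \<noteq> 0"
  shows "lowest_monom (p * q) = lowest_monom p + lowest_monom q"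
proof -
  let ?a = "lowest_monom p" and ?b = "lowest_monom q"
  have unique: "m + m' = ?a + ?b \<longleftrightarrow> m = ?a \<and> m' = ?b"
    if "m \<in> Poly_Mapping.keys p" "m' \<in> Poly_Mapping.keys q" for m m'
  proof -
    have "?a \<le> m" "?b \<le> m'" using lowest_monom_le that by auto
    then have "?a + ?b < m + m'" if "m \<noteq> ?a \<or> m' \<noteq> ?b"
      using that add_le_less_mono add_less_le_mono order_le_neq_trans by metis
    then show ?thesis by (metis less_irrefl)
  qed
  have "Poly_Mapping.lookup (p * q) (?a + ?b) = (\<Sum>m\<in>Poly_Mapping.keys p. \<Sum>m'\<in>Poly_Mapping.keys q.
      (if m = ?a \<and> m' = ?b then Poly_Mapping.lookup p m * Poly_Mapping.lookup q m' else 0))"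
    unfolding lookup_mult_expansion by (intro sum.cong refl) (simp add: when_def unique)
  also have "\<dots> = (\<Sum>m\<in>Poly_Mapping.keys p.
      if m = ?a then Poly_Mapping.lookup p m * Poly_Mapping.lookup q ?b else 0)"
    using lowest_monom_in_keys[OF assms(2)] by (intro sum.cong refl) (simp add: sum.delta')
  also have "\<dots> = Poly_Mapping.lookup p ?a * Poly_Mapping.lookup q ?b"
    using lowest_monom_in_keys[OF assms(1)] by (simp add: sum.delta')
  finally have "?a + ?b \<in> Poly_Mapping.keys (p * q)"
    using lowest_monom_in_keys[OF assms(1)] lowest_monom_in_keys[OF assms(2)] by (simp add: in_keys_iff)
  then show ?thesis
  proof (rule lowest_monom_eqI)
    fix m assume "m \<in> Poly_Mapping.keys (p * q)"
    then obtain a b where "m = a + b" "a \<in> Poly_Mapping.keys p" "b \<in> Poly_Mapping.keys q"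
      using keys_mult by blast
    then show "?a + ?b \<le> m" using add_mono[OF lowest_monom_le lowest_monom_le] by simp
  qed
qed

lemma lowest_monom_diff:
  fixes p q :: "('u::linorder, 'a::idom) mpoly"
  assumes "p \<noteq> 0" "lowest_monom p < lowest_monom q"
  shows "lowest_monom (q - p) = lowest_monom p"
proof (rule lowest_monom_eqI)
  have "Poly_Mapping.lookup q (lowest_monom p) = 0"
  proof (rule ccontr)
    assume "Poly_Mapping.lookup q (lowest_monom p) \<noteq> 0"
    then have "lowest_monom q \<le> lowest_monom p" by (simp add: lowest_monom_le in_keys_iff)
    then show False using assms(2) by simp
  qed
  then show "lowest_monom p \<in> Poly_Mapping.keys (q - p)"
    using lowest_monom_in_keys[OF assms(1)] by (simp add: in_keys_iff lookup_minus)
next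
  fix m assume "m \<in> Poly_Mapping.keys (q - p)"
  then have "m \<in> Poly_Mapping.keys q \<or> m \<in> Poly_Mapping.keys p" using keys_diff[of q p] by blast
  then show "lowest_monom p \<le> m"
    using lowest_monom_le[of m q] lowest_monom_le[of m p] assms(2) by auto
qed

section \<open>A valuation from a linear change of coordinates\<close>

definition lowest_degs :: "('u::linorder, 'a::idom) mpoly \<Rightarrow> 'u \<Rightarrow> int" where
  "lowest_degs p u = int (Poly_Mapping.lookup (lowest_monom p) u)"

lemma lowest_degs_mult: "p \<noteq> 0 \<Longrightarrow> q \<noteq> 0 \<Longrightarrow> lowest_degs (p * q) = lowest_degs p + lowest_degs q"
  by (simp add: lowest_degs_def lowest_monom_mult lookup_add fun_eq_iff)

lemma lowest_degs_mvar:
  "lowest_degs (mvar u :: ('u::linorder, 'a::idom) mpoly) = (\<lambda>u'. if u' = u then 1 else 0)"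
  by (simp add: lowest_degs_def lowest_monom_mvar lookup_single fun_eq_iff)

lemma lowest_degs_eq_0: "Poly_Mapping.lookup p 0 \<noteq> 0 \<Longrightarrow> lowest_degs p = 0"
  by (simp add: lowest_degs_def lowest_monom_eq_0 fun_eq_iff)

text \<open>The value at 0 is unspecified.\<close>

definition subst_val ::
    "('v::linorder \<Rightarrow> ('u::linorder, 'a::field) mpoly) \<Rightarrow> ('v, 'a) mpoly fract \<Rightarrow> 'u \<Rightarrow> int" where
  "subst_val r f = (SOME d. \<exists>p q. p \<noteq> 0 \<and> q \<noteq> 0 \<and> f = Fract p q \<and>
     d = lowest_degs (subst_mpoly r p) - lowest_degs (subst_mpoly r q))"

context
  fixes r :: "'v::linorder \<Rightarrow> ('u::linorder, 'a::field) mpoly"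
  assumes inj_subst: "inj (subst_mpoly r)"
begin

lemma subst_mpoly_nonzero: "p \<noteq> 0 \<Longrightarrow> subst_mpoly r p \<noteq> 0"
  using inj_subst by (metis injD subst_mpoly_zero)

lemma subst_val_Fract:
  assumes "p \<noteq> 0" "q \<noteq> 0"
  shows "subst_val r (Fract p q) = lowest_degs (subst_mpoly r p) - lowest_degs (subst_mpoly r q)"
proof -
  let ?d = "\<lambda>p q. lowest_degs (subst_mpoly r p) - lowest_degs (subst_mpoly r q)"
  let ?P = "\<lambda>d. \<exists>p' q'. p' \<noteq> 0 \<and> q' \<noteq> 0 \<and> Fract p q = Fract p' q' \<and> d = ?d p' q'"
  have well_defined: "?d p' q' = ?d p q" if "p' \<noteq> 0" "q' \<noteq> 0" "Fract p q = Fract p' q'" for p' q'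
  proof -
    have "subst_mpoly r p * subst_mpoly r q' = subst_mpoly r p' * subst_mpoly r q"
      using assms that by (simp add: eq_fract subst_mpoly_mult[symmetric])
    moreover have "lowest_degs (subst_mpoly r x * subst_mpoly r y)
        = lowest_degs (subst_mpoly r x) + lowest_degs (subst_mpoly r y)" if "x \<noteq> 0" "y \<noteq> 0" for x y
      using that by (simp add: lowest_degs_mult subst_mpoly_nonzero)
    ultimately have "lowest_degs (subst_mpoly r p) + lowest_degs (subst_mpoly r q')
        = lowest_degs (subst_mpoly r p') + lowest_degs (subst_mpoly r q)"
      using assms that by metis
    then show ?thesis by (simp add: algebra_simps)
  qed
  have "?P (?d p q)" using assms by blast
  then have "?P (subst_val r (Fract p q))" unfolding subst_val_def by (rule someI[of ?P])
  then obtain p' q' where "p' \<noteq> 0" "q' \<noteq> 0" "Fract p q = Fract p' q'"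
    "subst_val r (Fract p q) = ?d p' q'" by blast
  with well_defined show ?thesis by simp
qed

lemma subst_val_mult:
  assumes "f \<noteq> 0" "g \<noteq> 0"
  shows "subst_val r (f * g) = subst_val r f + subst_val r g"
proof -
  obtain p q where "f = Fract p q" "p \<noteq> 0" "q \<noteq> 0"
    using assms(1) by (cases f rule: Fract_cases_nonzero) auto
  moreover obtain p' q' where "g = Fract p' q'" "p' \<noteq> 0" "q' \<noteq> 0"
    using assms(2) by (cases g rule: Fract_cases_nonzero) auto
  ultimately show ?thesis
    by (simp add: subst_val_Fract subst_mpoly_mult lowest_degs_mult subst_mpoly_nonzero algebra_simps)
qed

lemma subst_val_mconst:
  assumes "c \<noteq> 0"
  shows "subst_val r (Fract (mconst c) 1) = 0"
proof -
  have "lowest_degs (mconst c :: ('u, 'a) mpoly) = 0" "lowest_degs (1 :: ('u, 'a) mpoly) = 0"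
    using assms by (simp_all add: lowest_degs_eq_0)
  then show ?thesis using subst_val_Fract[of "mconst c" 1] assms by (simp add: mconst_nonzero)
qed

lemma subst_val_steinberg:
  assumes "u \<noteq> 0" "u \<noteq> 1"
  shows "subst_val r u = 0 \<or> subst_val r (1 - u) = 0 \<or> subst_val r u = subst_val r (1 - u)"
proof -
  obtain p q where u: "u = Fract p q" "p \<noteq> 0" "q \<noteq> 0"
    using assms(1) by (cases u rule: Fract_cases_nonzero) auto
  have "q - p \<noteq> 0"
  proof
    assume "q - p = 0"
    then have "u = 1" using u by (simp add: One_fract_def eq_fract)
    then show False using assms(2) by simp
  qed
  have "1 - u = Fract (q - p) q" using u by (simp add: One_fract_def algebra_simps)
  define P Q where "P = subst_mpoly r p" and "Q = subst_mpoly r q"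
  have "P \<noteq> 0" "Q \<noteq> 0" using u by (simp_all add: P_def Q_def subst_mpoly_nonzero)
  have val_u: "subst_val r u = lowest_degs P - lowest_degs Q"
    using u by (simp add: subst_val_Fract P_def Q_def)
  have val_1u: "subst_val r (1 - u) = lowest_degs (Q - P) - lowest_degs Q"
    using u \<open>q - p \<noteq> 0\<close> \<open>1 - u = Fract (q - p) q\<close>
    by (simp add: subst_val_Fract subst_mpoly_diff P_def Q_def)
  consider "lowest_monom P = lowest_monom Q" | "lowest_monom P < lowest_monom Q"
    | "lowest_monom Q < lowest_monom P" using less_linear by blast
  then show ?thesis
  proof cases
    case 1
    then show ?thesis by (simp add: val_u lowest_degs_def fun_eq_iff)
  next
    case 2
    then have "lowest_monom (Q - P) = lowest_monom P" using \<open>P \<noteq> 0\<close> by (rule lowest_monom_diff[rotated])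
    then show ?thesis by (simp add: val_u val_1u lowest_degs_def fun_eq_iff)
  next
    case 3
    then have "lowest_monom (Q - P) = lowest_monom Q"
      using lowest_monom_diff[OF \<open>Q \<noteq> 0\<close> 3] lowest_monom_uminus[of "P - Q"] by simp
    then have "lowest_degs (Q - P) = lowest_degs Q" unfolding lowest_degs_def by simp
    then show ?thesis by (simp add: val_1u)
  qed
qed

end

lemma lin_indep_vecs_inverse:
  fixes a :: "nat \<Rightarrow> 'j::finite \<Rightarrow> 'a::field"
  assumes card: "card (UNIV :: 'j set) = Suc n" and indep: "lin_indep_vecs n a"
  obtains B :: "'j \<Rightarrow> nat \<Rightarrow> 'a" where
    "\<And>i r. i \<le> n \<Longrightarrow> r \<le> n \<Longrightarrow> (\<Sum>j\<in>UNIV. a i j * B j r) = (if i = r then 1 else 0)"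
    "\<And>j j'. (\<Sum>r\<le>n. B j r * a r j') = (if j = j' then 1 else 0)"
proof -
  obtain e :: "nat \<Rightarrow> 'j" where e: "bij_betw e {..<Suc n} UNIV"
    using ex_bij_betw_nat_finite[of "UNIV :: 'j set"] card by (auto simp: atLeast0LessThan)
  define A :: "'a mat" where "A = mat (Suc n) (Suc n) (\<lambda>(i, t). a i (e t))"
  have A: "A \<in> carrier_mat (Suc n) (Suc n)" by (simp add: A_def)
  have "det A \<noteq> 0"
  proof
    assume "det A = 0"
    then obtain l where l: "l \<in> carrier_vec (Suc n)" "l \<noteq> 0\<^sub>v (Suc n)"
      "transpose_mat A *\<^sub>v l = 0\<^sub>v (Suc n)"
      using det_0_iff_vec_prod_zero_field[of "transpose_mat A" "Suc n"] A det_transpose[OF A] by auto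
    have "(\<Sum>i\<le>n. l $ i * a i j) = 0" for j
    proof -
      obtain t where t: "t < Suc n" "j = e t"
        using e by (metis bij_betw_iff_bijections lessThan_iff UNIV_I)
      have "(transpose_mat A *\<^sub>v l) $ t = 0" using l(3) t by simp
      then show ?thesis
        using t l(1) A by (simp add: A_def scalar_prod_def lessThan_Suc_atMost atLeast0LessThan mult.commute)
    qed
    then have "\<forall>i\<le>n. l $ i = 0" using indep unfolding lin_indep_vecs_def by blast
    then have "l = 0\<^sub>v (Suc n)" using l(1) by (intro eq_vecI) auto
    then show False using l(2) by simp
  qed
  then obtain B' where B': "B' \<in> carrier_mat (Suc n) (Suc n)" "B' * A = 1\<^sub>m (Suc n)" "A * B' = 1\<^sub>m (Suc n)"
    using det_non_zero_imp_unit[OF A, of "()"] unfolding Units_def ring_mat_def by auto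
  define e' where "e' = inv_into {..<Suc n} e"
  have e': "e' j < Suc n" "e (e' j) = j" for j
    using bij_betw_inv_into_right[OF e] bij_betwE[OF bij_betw_inv_into[OF e]] by (auto simp: e'_def)
  show ?thesis
  proof (rule that[of "\<lambda>j r. B' $$ (e' j, r)"])
    fix i r assume "i \<le> n" "r \<le> n"
    have "(\<Sum>j\<in>UNIV. a i j * B' $$ (e' j, r)) = (\<Sum>t<Suc n. a i (e t) * B' $$ (t, r))"
      using sum.reindex_bij_betw[OF e, of "\<lambda>j. a i j * B' $$ (e' j, r)"]
        bij_betw_inv_into_left[OF e] by (simp add: e'_def)
    also have "\<dots> = (A * B') $$ (i, r)"
      using \<open>i \<le> n\<close> \<open>r \<le> n\<close> A B'(1) by (simp add: A_def scalar_prod_def atLeast0LessThan)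
    also have "\<dots> = (if i = r then 1 else 0)" using B'(3) \<open>i \<le> n\<close> \<open>r \<le> n\<close> by simp
    finally show "(\<Sum>j\<in>UNIV. a i j * B' $$ (e' j, r)) = (if i = r then 1 else 0)" .
  next
    fix j j'
    have "(\<Sum>r\<le>n. B' $$ (e' j, r) * a r j') = (B' * A) $$ (e' j, e' j')"
      using e' A B'(1) by (simp add: A_def scalar_prod_def atLeast0LessThan lessThan_Suc_atMost)
    also have "\<dots> = (if j = j' then 1 else 0)" using B'(2) e' by (metis index_one_mat(1))
    finally show "(\<Sum>r\<le>n. B' $$ (e' j, r) * a r j') = (if j = j' then 1 else 0)" .
  qed
qed

definition hom_var :: "'v option \<Rightarrow> ('v, 'a::comm_ring_1) mpoly" where
  "hom_var j = (case j of None \<Rightarrow> 1 | Some v \<Rightarrow> mvar v)"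

lemma lin_form_hom_var:
  "lin_form (a :: 'v::{finite,linorder} option \<Rightarrow> 'a::field) = (\<Sum>j\<in>UNIV. mconst (a j) * hom_var j)"
proof -
  have "(\<Sum>j\<in>UNIV. mconst (a j) * hom_var j)
      = mconst (a None) + (\<Sum>j\<in>range Some. mconst (a j) * hom_var j)"
    unfolding UNIV_option_conv by (subst sum.insert) (auto simp: hom_var_def)
  also have "(\<Sum>j\<in>range Some. mconst (a j) * hom_var j) = (\<Sum>v\<in>UNIV. mconst (a (Some v)) * mvar v)"
    by (subst sum.reindex) (auto simp: hom_var_def)
  finally show ?thesis by (simp add: lin_form_def mvar_def mult_single)
qed

lemma sum_mconst_mult_swap:
  fixes Z :: "'r \<Rightarrow> ('w, 'a::comm_ring_1) mpoly"
  assumes "finite J" "finite R"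
  shows "(\<Sum>j\<in>J. mconst (f j) * (\<Sum>r\<in>R. mconst (g j r) * Z r))
    = (\<Sum>r\<in>R. mconst (\<Sum>j\<in>J. f j * g j r) * Z r)"
proof -
  have "(\<Sum>j\<in>J. mconst (f j) * (\<Sum>r\<in>R. mconst (g j r) * Z r))
      = (\<Sum>j\<in>J. \<Sum>r\<in>R. mconst (f j * g j r) * Z r)"
    by (simp add: sum_distrib_left mult_single mult.assoc[symmetric])
  also have "\<dots> = (\<Sum>r\<in>R. \<Sum>j\<in>J. mconst (f j * g j r) * Z r)" by (rule sum.swap)
  finally show ?thesis by (simp add: mconst_sum sum_distrib_right)
qed

lemma sum_mconst_delta:
  "finite A \<Longrightarrow> i \<in> A \<Longrightarrow> (\<Sum>r\<in>A. mconst (if i = r then 1 else 0) * (f r :: ('w, 'a::comm_ring_1) mpoly)) = f i"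
  by (simp add: if_distrib[of mconst] if_distrib[of "\<lambda>x. x * _"] cong: if_cong)

text \<open>Given the inverse B of the matrix of the forms a_0, ..., a_n and an index k with B None k \<noteq> 0,
  the substitution of sum_r B (Some v) r Y_r for x_v maps the form a_i to the new coordinate Y_i, where
  Y_k is solved from the affine relation 1 = sum_r B None r Y_r.\<close>

context
  fixes a :: "nat \<Rightarrow> 'v::{finite,linorder} option \<Rightarrow> 'a::field" and n :: nat
    and B :: "'v option \<Rightarrow> nat \<Rightarrow> 'a" and k :: nat
  assumes aB: "\<And>i r. i \<le> n \<Longrightarrow> r \<le> n \<Longrightarrow> (\<Sum>j\<in>UNIV. a i j * B j r) = (if i = r then 1 else 0)"
    and Ba: "\<And>j j'. (\<Sum>r\<le>n. B j r * a r j') = (if j = j' then 1 else 0)"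
    and k: "k \<le> n" "B None k \<noteq> 0"
begin

definition new_coord :: "nat \<Rightarrow> (nat, 'a) mpoly" where
  "new_coord r = (if r = k
     then mconst (inverse (B None k)) * (1 - (\<Sum>s\<in>{..n} - {k}. mconst (B None s) * mvar s))
     else mvar r)"

definition old_to_new :: "'v \<Rightarrow> (nat, 'a) mpoly" where
  "old_to_new v = (\<Sum>r\<le>n. mconst (B (Some v) r) * new_coord r)"

definition new_to_old :: "nat \<Rightarrow> ('v, 'a) mpoly" where
  "new_to_old r = (if r \<le> n \<and> r \<noteq> k then lin_form (a r) else 0)"

lemma sum_remove_k: "(\<Sum>r\<le>n. f r) = f k + (\<Sum>r\<in>{..n} - {k}. f r)"
  using k(1) by (simp add: sum.remove)

lemma sum_new_coord_None: "(\<Sum>r\<le>n. mconst (B None r) * new_coord r) = 1"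
proof -
  have "(\<Sum>r\<in>{..n} - {k}. mconst (B None r) * new_coord r) = (\<Sum>r\<in>{..n} - {k}. mconst (B None r) * mvar r)"
    by (rule sum.cong) (auto simp: new_coord_def)
  then show ?thesis
    using k(2) by (simp add: sum_remove_k new_coord_def mult.assoc[symmetric] mult_single)
qed

lemma subst_old_to_new_hom_var:
  "subst_mpoly old_to_new (hom_var j) = (\<Sum>r\<le>n. mconst (B j r) * new_coord r)"
  by (cases j) (simp_all add: hom_var_def sum_new_coord_None old_to_new_def)

lemma subst_old_to_new_lin_form:
  assumes "i \<le> n"
  shows "subst_mpoly old_to_new (lin_form (a i)) = new_coord i"
proof -
  have "subst_mpoly old_to_new (lin_form (a i))
      = (\<Sum>r\<le>n. mconst (\<Sum>j\<in>UNIV. a i j * B j r) * new_coord r)"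
    by (simp add: lin_form_hom_var subst_mpoly_sum subst_mpoly_mult subst_old_to_new_hom_var
        sum_mconst_mult_swap)
  also have "\<dots> = (\<Sum>r\<le>n. mconst (if i = r then 1 else 0) * new_coord r)"
    using assms by (intro sum.cong) (simp_all add: aB)
  also have "\<dots> = new_coord i" using assms by (simp add: sum_mconst_delta)
  finally show ?thesis .
qed

lemma sum_lin_form: "(\<Sum>r\<le>n. mconst (B j r) * lin_form (a r)) = hom_var j"
  by (simp add: lin_form_hom_var sum_mconst_mult_swap Ba sum_mconst_delta)

lemma subst_new_to_old_new_coord: "r \<le> n \<Longrightarrow> subst_mpoly new_to_old (new_coord r) = lin_form (a r)"
proof (cases "r = k")
  case True
  have "(\<Sum>s\<in>{..n} - {k}. mconst (B None s) * new_to_old s)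
      = (\<Sum>s\<in>{..n} - {k}. mconst (B None s) * lin_form (a s))"
    by (intro sum.cong) (auto simp: new_to_old_def)
  also have "\<dots> = (\<Sum>r\<le>n. mconst (B None r) * lin_form (a r)) - mconst (B None k) * lin_form (a k)"
    using sum_remove_k[of "\<lambda>r. mconst (B None r) * lin_form (a r)"] by simp
  also have "\<dots> = 1 - mconst (B None k) * lin_form (a k)" by (simp add: sum_lin_form hom_var_def)
  finally have sum_rest: "(\<Sum>s\<in>{..n} - {k}. mconst (B None s) * new_to_old s)
      = 1 - mconst (B None k) * lin_form (a k)" .
  have "subst_mpoly new_to_old (new_coord k) = mconst (inverse (B None k))
      * (1 - (\<Sum>s\<in>{..n} - {k}. mconst (B None s) * new_to_old s))"
    by (simp add: new_coord_def subst_mpoly_mult subst_mpoly_diff subst_mpoly_sum)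
  also have "\<dots> = mconst (inverse (B None k)) * (mconst (B None k) * lin_form (a k))"
    by (simp add: sum_rest)
  also have "\<dots> = lin_form (a k)" using k(2) by (simp add: mult.assoc[symmetric] mult_single)
  finally show ?thesis using True by simp
qed (simp add: new_coord_def new_to_old_def)

lemma subst_new_to_old_old_to_new: "subst_mpoly new_to_old (subst_mpoly old_to_new p) = p"
proof -
  have "subst_mpoly new_to_old (old_to_new v) = (\<Sum>r\<le>n. mconst (B (Some v) r) * lin_form (a r))" for v
    unfolding old_to_new_def subst_mpoly_sum subst_mpoly_mult subst_mpoly_mconst
    by (intro sum.cong refl) (simp add: subst_new_to_old_new_coord)
  then have "(\<lambda>v. subst_mpoly new_to_old (old_to_new v)) = mvar"
    by (simp add: sum_lin_form hom_var_def fun_eq_iff)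
  then show ?thesis unfolding subst_mpoly_subst_mpoly by simp
qed

lemma lowest_degs_new_coord: "lowest_degs (new_coord r) = (\<lambda>u. if r \<noteq> k \<and> u = r then 1 else 0)"
proof (cases "r = k")
  case True
  have "Poly_Mapping.lookup (\<Sum>s\<in>{..n} - {k}. mconst (B None s) * mvar s) 0 = 0"
    by (simp add: lookup_sum lookup_mconst_mult mvar_def lookup_single when_def)
  then have "Poly_Mapping.lookup (new_coord k) 0 \<noteq> 0"
    using k(2) by (simp add: new_coord_def lookup_mconst_mult lookup_minus)
  then show ?thesis using True by (simp add: lowest_degs_eq_0 fun_eq_iff)
qed (simp add: new_coord_def lowest_degs_mvar fun_eq_iff)

end

lemma lin_indep_coordinate_change:
  fixes a :: "nat \<Rightarrow> 'v::{finite,linorder} option \<Rightarrow> 'a::field"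
  assumes "n = card (UNIV :: 'v set)" "lin_indep_vecs n a"
  obtains r :: "'v \<Rightarrow> (nat, 'a) mpoly" and k where "k \<le> n" "inj (subst_mpoly r)"
    "\<And>i. i \<le> n \<Longrightarrow> lowest_degs (subst_mpoly r (lin_form (a i))) = (\<lambda>u. if i \<noteq> k \<and> u = i then 1 else 0)"
proof -
  have card: "card (UNIV :: 'v option set) = Suc n"
    using assms(1) by (simp add: UNIV_option_conv card_image)
  obtain B where aB: "\<And>i r. i \<le> n \<Longrightarrow> r \<le> n \<Longrightarrow> (\<Sum>j\<in>UNIV. a i j * B j r) = (if i = r then 1 else 0)"
    and Ba: "\<And>j j'. (\<Sum>r\<le>n. B j r * a r j') = (if j = j' then 1 else 0)"
    by (rule lin_indep_vecs_inverse[OF card assms(2)]) (rule that)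
  have "\<exists>k\<le>n. B None k \<noteq> 0"
  proof (rule ccontr)
    assume "\<not> ?thesis"
    then have "(\<Sum>r\<le>n. B None r * a r None) = 0" by simp
    then show False using Ba[of None None] by simp
  qed
  then obtain k where k: "k \<le> n" "B None k \<noteq> 0" by blast
  show ?thesis
  proof (rule that[OF k(1)])
    show "inj (subst_mpoly (old_to_new n B k))"
      by (rule inj_on_inverseI[where g = "subst_mpoly (new_to_old a n k)"])
        (rule subst_new_to_old_old_to_new[OF aB Ba k])
    show "lowest_degs (subst_mpoly (old_to_new n B k) (lin_form (a i))) = (\<lambda>u. if i \<noteq> k \<and> u = i then 1 else 0)"
      if "i \<le> n" for i
      using that by (simp add: subst_old_to_new_lin_form[OF aB Ba k] lowest_degs_new_coord[OF aB Ba k])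
  qed
qed

section \<open>The symbol of n + 1 hyperplanes\<close>

lemma const_fun_mult_Fract: "const_fun c * Fract p q = Fract (mconst c * p) q"
  by (simp add: const_fun_def)

lemma const_fun_mult: "const_fun x * const_fun y = (const_fun (x * y) :: ('v::{finite,linorder}, 'a::field) mpoly fract)"
  by (simp add: const_fun_def mult_single)

lemma const_fun_uminus: "- const_fun x = (const_fun (- x) :: ('v::{finite,linorder}, 'a::field) mpoly fract)"
  by (simp add: const_fun_def single_uminus)

lemma const_fun_inverse:
  "inverse (const_fun x) = (const_fun (inverse x) :: ('v::{finite,linorder}, 'a::field) mpoly fract)"
  by (cases "x = 0") (simp_all add: const_fun_def fract_collapse eq_fract mconst_nonzero mult_single)

lemma const_fun_nonzero: "x \<noteq> 0 \<Longrightarrow> (const_fun x :: ('v::{finite,linorder}, 'a::field) mpoly fract) \<noteq> 0"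
  by (simp add: const_fun_def eq_fract Zero_fract_def mconst_nonzero)

lemma range_const_fun_closed:
  fixes C :: "('v::{finite,linorder}, 'a::field) mpoly fract set"
  defines "C \<equiv> range const_fun"
  shows "x \<in> C \<Longrightarrow> y \<in> C \<Longrightarrow> x * y \<in> C" "x \<in> C \<Longrightarrow> inverse x \<in> C" "x \<in> C \<Longrightarrow> - x \<in> C"
    "0 \<in> C" "1 \<in> C"
  unfolding C_def
  by (auto simp: const_fun_mult const_fun_inverse const_fun_uminus)
    (metis const_fun_def fract_collapse(1) single_zero rangeI, metis const_fun_def fract_collapse(2) single_one rangeI)

lemma sum_Fract_common_denom:
  assumes "q \<noteq> 0"
  shows "(\<Sum>i\<in>I. Fract (p i) q) = Fract (\<Sum>i\<in>I. p i) q"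
  by (induction I rule: infinite_finite_induct) (simp_all add: assms eq_fract algebra_simps fract_collapse)

lemma lin_form_nonzero:
  assumes "\<exists>j. a j \<noteq> 0"
  shows "lin_form (a :: 'v::{finite,linorder} option \<Rightarrow> 'a::field) \<noteq> 0"
proof
  assume zero: "lin_form a = 0"
  obtain j where "a j \<noteq> 0" using assms by blast
  moreover have "Poly_Mapping.lookup (lin_form a) 0 = a None"
    "Poly_Mapping.lookup (lin_form a) (Poly_Mapping.single v 1) = a (Some v)" for v
    by (simp_all add: lin_form_def lookup_add lookup_sum lookup_single when_def)
  ultimately show False using zero by (cases j) auto
qed

lemma lin_form_zero: "lin_form (\<lambda>j. 0) = 0"
  by (simp add: lin_form_hom_var)

lemma lin_form_sum:
  fixes a :: "nat \<Rightarrow> 'v::{finite,linorder} option \<Rightarrow> 'a::field"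
  assumes "finite I"
  shows "(\<Sum>i\<in>I. mconst (l i) * lin_form (a i)) = lin_form (\<lambda>j. \<Sum>i\<in>I. l i * a i j)"
  using assms by (simp add: lin_form_hom_var sum_mconst_mult_swap)

lemma Fract_nonzero: "p \<noteq> 0 \<Longrightarrow> q \<noteq> 0 \<Longrightarrow> Fract p q \<noteq> 0"
  by (simp add: Zero_fract_def eq_fract)

lemma affine_relation_of_linear_relation:
  fixes a :: "nat \<Rightarrow> 'v::{finite,linorder} option \<Rightarrow> 'a::field" and c l :: "nat \<Rightarrow> 'a"
  assumes "\<And>j. (\<Sum>i\<le>n. l i * a i j) = 0" "lin_form (a 0) \<noteq> 0"
    and "\<And>i. 1 \<le> i \<Longrightarrow> i \<le> n \<Longrightarrow> c i \<noteq> 0"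
  shows "const_fun (l 0) + (\<Sum>i<n. const_fun (l (Suc i) / c (Suc i))
      * (const_fun (c (Suc i)) * Fract (lin_form (a (Suc i))) (lin_form (a 0)))) = (0 :: ('v, 'a) mpoly fract)"
proof -
  let ?L = "\<lambda>i. lin_form (a i)"
  have "const_fun (l (Suc i) / c (Suc i)) * (const_fun (c (Suc i)) * Fract (?L (Suc i)) (?L 0))
      = Fract (mconst (l (Suc i)) * ?L (Suc i)) (?L 0)" if "i < n" for i
    using that assms(3)[of "Suc i"] by (simp add: const_fun_mult_Fract mult.assoc[symmetric] mult_single)
  moreover have "const_fun (l 0) = Fract (mconst (l 0) * ?L 0) (?L 0)"
    using assms(2) by (simp add: const_fun_def eq_fract)
  ultimately have "const_fun (l 0) + (\<Sum>i<n. const_fun (l (Suc i) / c (Suc i))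
      * (const_fun (c (Suc i)) * Fract (?L (Suc i)) (?L 0))) = (\<Sum>i\<le>n. Fract (mconst (l i) * ?L i) (?L 0))"
    by (simp add: sum.atMost_shift)
  also have "\<dots> = Fract (lin_form (\<lambda>j. \<Sum>i\<le>n. l i * a i j)) (?L 0)"
    using assms(2) by (simp add: sum_Fract_common_denom lin_form_sum)
  also have "\<dots> = 0" by (simp add: assms(1) lin_form_zero fract_collapse)
  finally show ?thesis .
qed

lemma dependent_imp_class_zero:
  fixes a :: "nat \<Rightarrow> 'v::{finite,linorder} option \<Rightarrow> 'a::field" and c :: "nat \<Rightarrow> 'a"
  assumes hyp: "\<And>i. i \<le> n \<Longrightarrow> \<exists>j. a i j \<noteq> 0"
    and cnz: "\<And>i. 1 \<le> i \<Longrightarrow> i \<le> n \<Longrightarrow> c i \<noteq> 0"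
    and dep: "\<not> lin_indep_vecs n a"
  shows "\<not> nonzero_class_mod_const (range (const_fun :: 'a \<Rightarrow> ('v, 'a) mpoly fract))
           (map (\<lambda>i. const_fun (c i) * Fract (lin_form (a i)) (lin_form (a 0))) [1..<n+1])"
proof -
  define gs where "gs = map (\<lambda>i. const_fun (c i) * Fract (lin_form (a i)) (lin_form (a 0))) [1..<n+1]"
  have forms_nonzero: "lin_form (a i) \<noteq> 0" if "i \<le> n" for i using hyp[OF that] by (rule lin_form_nonzero)
  have "length gs = n" by (simp add: gs_def)
  have gs_nth: "gs ! i = const_fun (c (Suc i)) * Fract (lin_form (a (Suc i))) (lin_form (a 0))"
    if "i < n" for i
    using that by (simp add: gs_def del: upt_Suc)
  have "0 \<notin> set gs"
    using gs_nth forms_nonzero cnz \<open>length gs = n\<close>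
    by (auto simp: in_set_conv_nth const_fun_nonzero Fract_nonzero)
  from dep obtain l i0 where l: "\<And>j. (\<Sum>i\<le>n. l i * a i j) = 0" and "i0 \<le> n" "l i0 \<noteq> 0"
    unfolding lin_indep_vecs_def by blast
  define \<mu> :: "nat \<Rightarrow> ('v, 'a) mpoly fract" where "\<mu> i = const_fun (l (Suc i) / c (Suc i))" for i
  have "const_fun (l 0) + (\<Sum>i<n. const_fun (l (Suc i) / c (Suc i))
      * (const_fun (c (Suc i)) * Fract (lin_form (a (Suc i))) (lin_form (a 0)))) = 0"
    by (rule affine_relation_of_linear_relation) (use l forms_nonzero cnz in auto)
  then have relation: "const_fun (l 0) + (\<Sum>i<length gs. \<mu> i * gs ! i) = 0"
    using \<open>length gs = n\<close> by (simp add: \<mu>_def gs_nth)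
  have nontrivial: "\<exists>i<length gs. \<mu> i \<noteq> 0"
  proof (rule ccontr)
    assume "\<not> (\<exists>i<length gs. \<mu> i \<noteq> 0)"
    then have l_Suc: "l (Suc i) = 0" if "i < n" for i
      using that cnz[of "Suc i"] const_fun_nonzero[of "l (Suc i) / c (Suc i)"] \<open>length gs = n\<close>
      by (auto simp: \<mu>_def)
    have "l 0 \<noteq> 0"
    proof (cases i0)
      case (Suc m)
      then show ?thesis using l_Suc[of m] \<open>i0 \<le> n\<close> \<open>l i0 \<noteq> 0\<close> by simp
    qed (use \<open>l i0 \<noteq> 0\<close> in simp)
    moreover have "l 0 * a 0 j = 0" for j using l[of j] l_Suc by (simp add: sum.atMost_shift)
    ultimately show False using hyp[of 0] by simp
  qed
  have "symb gs \<in> milnor_const_rels (range const_fun) (length gs)"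
    by (rule symb_rels_of_affine_relation[where \<nu> = "const_fun (l 0)" and \<mu> = \<mu>])
      (use \<open>0 \<notin> set gs\<close> relation nontrivial in \<open>auto intro: range_const_fun_closed simp: \<mu>_def\<close>)
  then show ?thesis by (simp add: nonzero_class_mod_const_iff gs_def)
qed

text \<open>After the coordinate change, subst_val r (L_i / L_0) = e_i - e_0 with e_k = 0; replacing the
  coordinate k by minus the total degree turns these vectors into the standard basis of Z^n.\<close>

lemma lin_indep_symbol_valuation:
  fixes a :: "nat \<Rightarrow> 'v::{finite,linorder} option \<Rightarrow> 'a::field"
  assumes n_def: "n = card (UNIV :: 'v set)" and hyp: "\<And>i. i \<le> n \<Longrightarrow> \<exists>j. a i j \<noteq> 0"
    and indep: "lin_indep_vecs n a"
  obtains W where "symbol_valuation W (range (const_fun :: 'a \<Rightarrow> ('v, 'a) mpoly fract))"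
    "\<And>i j. i < n \<Longrightarrow> j < n \<Longrightarrow>
      W (Fract (lin_form (a (Suc i))) (lin_form (a 0))) j = (if i = j then 1 else 0)"
proof -
  obtain r :: "'v \<Rightarrow> (nat, 'a) mpoly" and k where "k \<le> n" and inj: "inj (subst_mpoly r)"
    and lowest: "\<And>i. i \<le> n \<Longrightarrow>
      lowest_degs (subst_mpoly r (lin_form (a i))) = (\<lambda>u. if i \<noteq> k \<and> u = i then 1 else 0)"
    by (rule lin_indep_coordinate_change[where a = a, OF n_def indep]) (rule that)
  define T :: "(nat \<Rightarrow> int) \<Rightarrow> nat \<Rightarrow> int" where
    "T w j = (if Suc j = k then - (\<Sum>u\<le>n. w u) else w (Suc j))" for w j
  define W where "W f = T (subst_val r f)" for f
  have T_add: "T (v + w) = T v + T w" for v w by (simp add: T_def fun_eq_iff sum.distrib)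
  have T_0: "T 0 = 0" by (simp add: T_def fun_eq_iff)
  show ?thesis
  proof (rule that)
    show "symbol_valuation W (range const_fun)"
    proof
      fix x y :: "('v, 'a) mpoly fract" assume "x \<noteq> 0" "y \<noteq> 0"
      then show "W (x * y) = W x + W y" by (simp add: W_def subst_val_mult[OF inj] T_add)
    next
      fix x :: "('v, 'a) mpoly fract" assume "x \<in> range const_fun" "x \<noteq> 0"
      then obtain c where x: "x = const_fun c" by blast
      with \<open>x \<noteq> 0\<close> have "c \<noteq> 0" by (auto simp: const_fun_def fract_collapse)
      with x show "W x = 0" by (simp add: W_def const_fun_def subst_val_mconst[OF inj] T_0)
    next
      fix u :: "('v, 'a) mpoly fract" assume "u \<noteq> 0" "u \<noteq> 1"
      then show "W u = 0 \<or> W (1 - u) = 0 \<or> W u = W (1 - u)"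
        using subst_val_steinberg[OF inj, of u] T_0 by (auto simp: W_def)
    qed
  next
    fix i j assume "i < n" "j < n"
    have "lin_form (a i) \<noteq> 0" if "i \<le> n" for i using hyp[OF that] by (rule lin_form_nonzero)
    then have val: "subst_val r (Fract (lin_form (a (Suc i))) (lin_form (a 0)))
        = (\<lambda>u. if Suc i \<noteq> k \<and> u = Suc i then 1 else 0) - (\<lambda>u. if 0 \<noteq> k \<and> u = 0 then 1 else 0)"
      using \<open>i < n\<close> by (simp add: subst_val_Fract[OF inj] lowest)
    show "W (Fract (lin_form (a (Suc i))) (lin_form (a 0))) j = (if i = j then 1 else 0)"
      using \<open>i < n\<close> \<open>j < n\<close> unfolding W_def val T_def by (auto simp: sum_subtractf sum_negf sum.delta sum.delta')
  qed
qed

lemma independent_imp_class_nonzero: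
  fixes a :: "nat \<Rightarrow> 'v::{finite,linorder} option \<Rightarrow> 'a::field" and c :: "nat \<Rightarrow> 'a"
  assumes n_def: "n = card (UNIV :: 'v set)" and hyp: "\<And>i. i \<le> n \<Longrightarrow> \<exists>j. a i j \<noteq> 0"
    and cnz: "\<And>i. 1 \<le> i \<Longrightarrow> i \<le> n \<Longrightarrow> c i \<noteq> 0"
    and indep: "lin_indep_vecs n a"
  shows "nonzero_class_mod_const (range (const_fun :: 'a \<Rightarrow> ('v, 'a) mpoly fract))
           (map (\<lambda>i. const_fun (c i) * Fract (lin_form (a i)) (lin_form (a 0))) [1..<n+1])"
    (is "nonzero_class_mod_const ?C ?gs")
proof -
  obtain W where valuation: "symbol_valuation W ?C" and basis: "\<And>i j. i < n \<Longrightarrow> j < n \<Longrightarrow>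
      W (Fract (lin_form (a (Suc i))) (lin_form (a 0))) j = (if i = j then 1 else 0)"
  proof (rule lin_indep_symbol_valuation[where a = a, OF n_def _ indep])
    show "\<exists>j. a i j \<noteq> 0" if "i \<le> n" for i using hyp that .
  qed (rule that)
  interpret symbol_valuation W ?C n by (rule valuation)
  have "lin_form (a i) \<noteq> 0" if "i \<le> n" for i using hyp[OF that] by (rule lin_form_nonzero)
  then have "W (?gs ! i) = W (Fract (lin_form (a (Suc i))) (lin_form (a 0)))" if "i < n" for i
    using that cnz[of "Suc i"]
    by (simp add: v_mult v_const const_fun_nonzero Fract_nonzero rangeI del: upt_Suc)
  then have "mat\<^sub>r n n (\<lambda>i. val_vec (?gs ! i)) = 1\<^sub>m n"
    by (intro eq_matI) (simp_all add: val_vec_def basis)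
  then have "val_det ?gs = 1" by (simp add: val_det_def)
  then show ?thesis by (intro nonzero_class_if_val_det) simp_all
qed

theorem lemma5p4:
  fixes a :: "nat \<Rightarrow> 'v::{finite,linorder} option \<Rightarrow> 'a::field"
    and c :: "nat \<Rightarrow> 'a"
    and n :: nat
  assumes n_def: "n = card (UNIV :: 'v set)"
    and hyp: "\<And>i. i \<le> n \<Longrightarrow> \<exists>j. a i j \<noteq> 0"
    and cnz: "\<And>i. 1 \<le> i \<Longrightarrow> i \<le> n \<Longrightarrow> c i \<noteq> 0"
  shows "nonzero_class_mod_const (range (const_fun :: 'a \<Rightarrow> ('v, 'a) mpoly fract))
           (map (\<lambda>i. const_fun (c i) * Fract (lin_form (a i)) (lin_form (a 0))) [1..<n+1])
         \<longleftrightarrow> lin_indep_vecs n a"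
  using dependent_imp_class_zero[where a = a and c = c and n = n]
    independent_imp_class_nonzero[where a = a and c = c and n = n] n_def hyp cnz
  by blast

end
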